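(* In Setting B (below), suppose the initial output satisfies $\underline y(0)<y(0)<\overline y(0)$ (equivalently $-\alpha(0)<\varphi_1(0)<\beta(0)$) and $u(0)=0$. Then along the closed-loop solution $$\frac{d}{dt}\mathcal{W}_{n+1}\le -\frac{k_1\zeta^{2r}}{1-\zeta^{2r}}-\sum_{j=2}^{n}k_j\varphi_j^2-k_{n+1}\varrho^2,$$ and $(\varphi_1(t),\dots,\varphi_n(t),\varrho(t))\to0$ as $t\to\infty$; i.e. the closed-loop error dynamics are (semi-globally, for all initial outputs in the constraint set) asymptotically stable.
   Context: Setting B. Let $n\ge2$. Plant: $\dot x_i=f_i(\bar x_i)+g_i(\bar x_i)x_{i+1}$ ($i=1,\dots,n-1$), $\dot x_n=f_n(\bar x_n)+g_n(\bar x_n)u$, $y=x_1$, $\bar x_i=(x_1,\dots,x_i)$, $f_i,g_i:\mathbb{R}^i\to\mathbb{R}$ smooth, with constants $0<\underline g_i\le\bar g_i$ such that $\underline g_i\le|g_i(\bar x_i)|\le\bar g_i$. Input $u$ generated by the saturation model $\dot u=p_1G(u)u_c-p_1p_2u$, $u(0)=0$, with $u_{\min}<0<u_{\max}$, $p_1,p_2>0$, $\gamma$ an even positive integer, $G(u)=\rho(u)[1-(u/u_{\max})^\gamma]+(1-\rho(u))[1-(u/u_{\min})^\gamma]$, $\rho(u)=1$ if $u>0$, $0$ otherwise. Output constraints: continuous $\underline y(t)<\overline y(t)$ with $\underline y,\overline y$ and their derivatives up to order $n+1$ bounded. Reference $y_d$ with derivatives up to order $n+1$ bounded and with $\underline y(t)<y_d(t)<\overline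 y(t)$; set $\alpha(t)=y_d(t)-\underline y(t)$, $\beta(t)=\overline y(t)-y_d(t)$ and assume there are constants $0<\underline\alpha\le\alpha(t)\le\overline\alpha$, $0<\underline\beta\le\beta(t)\le\overline\beta$ for all $t\ge0$. Fix $r\in\mathbb{N}$ with $2r\ge n$, gains $k_1,\dots,k_{n+1}>0$, $\delta>0$. Error coordinates: $\varphi_1=y-y_d$, $\varphi_i=x_i-\eta_{i-1}$ ($i=2,\dots,n$), $\varrho=u-\eta_n$. Let $s=1$ if $\varphi_1>0$ and $s=0$ otherwise; $\zeta=s\varphi_1/\beta+(1-s)\varphi_1/\alpha$; $\digamma=\frac{s}{\beta^{2r}-\varphi_1^{2r}}+\frac{1-s}{\alpha^{2r}-\varphi_1^{2r}}$. Stabilizing functions: $\eta_1=\frac{1}{g_1(x_1)}[\dot y_d-f_1(x_1)-(k_1+\overline k_1(t))\varphi_1]$ with $\overline k_1(t)=\sqrt{(\dot\alpha/\alpha)^2+(\dot\beta/\beta)^2+\delta}$; for $i=2,\dots,n$, $\eta_i=\frac{1}{g_i(\bar x_i)}[\dot\eta_{i-1}-f_i(\bar x_i)-c_i-k_i\varphi_i]$ where $c_2=\digamma g_1(x_1)\varphi_1^{2r-1}$ and $c_i=g_{i-1}(\bar x_{i-1})\varphi_{i-1}$ for $i\ge3$, and $\dot\eta_{i-1}$ is the total time derivative of $\eta_{i-1}$ along the dynamics. Commanded input: $u_c=\frac{p_1p_2u+\dot\eta_n-g_n(\bar x_n)\varphi_n-k_{n+1}\varrho}{p_1G(u)}$.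 Barrier Lyapunov function: $\mathcal{W}_1=\frac{1}{2r}\ln\frac{1}{1-\zeta^{2r}}$ (equivalently $\frac{s}{2r}\ln\frac{\beta^{2r}}{\beta^{2r}-\varphi_1^{2r}}+\frac{1-s}{2r}\ln\frac{\alpha^{2r}}{\alpha^{2r}-\varphi_1^{2r}}$), and $\mathcal{W}_{n+1}=\mathcal{W}_1+\tfrac12\sum_{j=2}^n\varphi_j^2+\tfrac12\varrho^2$. *)

theory Defs
  imports "HOL-Analysis.Analysis"
begin

text \<open>A state is a vector indexed by nat; only coordinates 1..m matter for a function of
  \<open>(x_1,...,x_m)\<close>. Smoothness (C-infinity on R^m) is defined by hand via partial derivatives.\<close>

definition agree_out :: "nat \<Rightarrow> (nat \<Rightarrow> real) \<Rightarrow> (nat \<Rightarrow> real) \<Rightarrow> bool" where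
  "agree_out m x y \<longleftrightarrow> (\<forall>j. j \<notin> {1..m} \<longrightarrow> x j = y j)"

definition dist_m :: "nat \<Rightarrow> (nat \<Rightarrow> real) \<Rightarrow> (nat \<Rightarrow> real) \<Rightarrow> real" where
  "dist_m m x y = sqrt (\<Sum>j=1..m. (x j - y j)^2)"

definition cont_in :: "nat \<Rightarrow> ((nat \<Rightarrow> real) \<Rightarrow> real) \<Rightarrow> bool" where
  "cont_in m F \<longleftrightarrow> (\<forall>x. \<forall>\<epsilon>>0. \<exists>\<delta>>0. \<forall>y. agree_out m x y \<and> dist_m m x y < \<delta> \<longrightarrow> \<bar>F y - F x\<bar> < \<epsilon>)"

definition grad_at :: "nat \<Rightarrow> ((nat \<Rightarrow> real) \<Rightarrow> real) \<Rightarrow> (nat \<Rightarrow> real) \<Rightarrow> (nat \<Rightarrow> real) \<Rightarrow> bool" where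
  "grad_at m F D x \<longleftrightarrow> (\<forall>\<epsilon>>0. \<exists>\<delta>>0. \<forall>y. agree_out m x y \<and> dist_m m x y < \<delta> \<longrightarrow>
      \<bar>F y - F x - (\<Sum>j=1..m. D j * (y j - x j))\<bar> \<le> \<epsilon> * dist_m m x y)"

fun Ck :: "nat \<Rightarrow> nat \<Rightarrow> ((nat \<Rightarrow> real) \<Rightarrow> real) \<Rightarrow> bool" where
  "Ck m 0 F = cont_in m F"
| "Ck m (Suc k) F = (\<exists>D :: nat \<Rightarrow> (nat \<Rightarrow> real) \<Rightarrow> real.
      (\<forall>x. grad_at m F (\<lambda>j. D j x) x) \<and> (\<forall>j\<in>{1..m}. Ck m k (D j)))"

definition smooth_fun :: "nat \<Rightarrow> ((nat \<Rightarrow> real) \<Rightarrow> real) \<Rightarrow> bool" where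
  "smooth_fun m F \<longleftrightarrow> (\<forall>x y. (\<forall>j\<in>{1..m}. x j = y j) \<longrightarrow> F x = F y) \<and> (\<forall>k. Ck m k F)"

definition tder :: "(real \<Rightarrow> real) \<Rightarrow> real \<Rightarrow> real" where
  "tder h t = vector_derivative h (at t within {0..})"

definition bdd_derivs :: "nat \<Rightarrow> (real \<Rightarrow> real) \<Rightarrow> bool" where
  "bdd_derivs N h \<longleftrightarrow> (\<exists>D :: nat \<Rightarrow> real \<Rightarrow> real. D 0 = h \<and>
      (\<forall>m<N. \<forall>t\<ge>0. (D m has_real_derivative D (Suc m) t) (at t within {0..})) \<and>
      (\<forall>m\<le>N. \<exists>B. \<forall>t\<ge>0. \<bar>D m t\<bar> \<le> B))"

definition satG :: "real \<Rightarrow> real \<Rightarrow> nat \<Rightarrow> real \<Rightarrow> real" where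
  "satG umin umax \<gamma> u =
     (let \<rho> = (if u > 0 then 1 else 0 :: real)
      in \<rho> * (1 - (u / umax)^\<gamma>) + (1 - \<rho>) * (1 - (u / umin)^\<gamma>))"

text \<open>\<open>\<zeta>\<close> and \<open>\<digamma>\<close> as functions of \<open>\<alpha>, \<beta>, \<phi>\<^sub>1\<close> (s = 1 iff \<open>\<phi>\<^sub>1 > 0\<close>).\<close>
definition zeta :: "real \<Rightarrow> real \<Rightarrow> real \<Rightarrow> real" where
  "zeta a b p = (let s = (if p > 0 then 1 else 0 :: real) in s * p / b + (1 - s) * p / a)"

definition digam :: "nat \<Rightarrow> real \<Rightarrow> real \<Rightarrow> real \<Rightarrow> real" where
  "digam r a b p = (let s = (if p > 0 then 1 else 0 :: real) in
      s / (b^(2*r) - p^(2*r)) + (1 - s) / (a^(2*r) - p^(2*r)))"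

text \<open>Convention: \<open>eta 0 = y_d\<close>, so that
  \<open>\<phi>\<^sub>j(t) = x_j(t) - eta (j-1) t\<close> for all j = 1..n. The derivative \<open>\<dot>\<eta>\<^sub>i\<^sub>-\<^sub>1\<close> (the total time derivative
  along the dynamics) is the time derivative of \<open>t \<mapsto> \<eta>\<^sub>i\<^sub>-\<^sub>1(t)\<close> along the solution.\<close>
fun eta :: "(nat \<Rightarrow> (nat \<Rightarrow> real) \<Rightarrow> real) \<Rightarrow> (nat \<Rightarrow> (nat \<Rightarrow> real) \<Rightarrow> real) \<Rightarrow> (nat \<Rightarrow> real) \<Rightarrow>
    nat \<Rightarrow> real \<Rightarrow> (real \<Rightarrow> real) \<Rightarrow> (real \<Rightarrow> real) \<Rightarrow> (real \<Rightarrow> real) \<Rightarrow> (real \<Rightarrow> nat \<Rightarrow> real) \<Rightarrow>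
    nat \<Rightarrow> real \<Rightarrow> real" where
  "eta f g k r \<delta> yd ylo yhi x 0 = yd"
| "eta f g k r \<delta> yd ylo yhi x (Suc 0) = (\<lambda>t.
     (let \<alpha> = (\<lambda>s. yd s - ylo s); \<beta> = (\<lambda>s. yhi s - yd s); \<phi>1 = x t 1 - yd t;
          kbar = sqrt ((tder \<alpha> t / \<alpha> t)^2 + (tder \<beta> t / \<beta> t)^2 + \<delta>)
      in (1 / g 1 (x t)) * (tder yd t - f 1 (x t) - (k 1 + kbar) * \<phi>1)))"
| "eta f g k r \<delta> yd ylo yhi x (Suc (Suc i)) = (\<lambda>t.
     (let j = Suc (Suc i);
          \<phi> = x t j - eta f g k r \<delta> yd ylo yhi x (Suc i) t;
          \<phi>prev = x t (Suc i) - eta f g k r \<delta> yd ylo yhi x i t;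
          c = (if i = 0 then digam r (yd t - ylo t) (yhi t - yd t) \<phi>prev * g 1 (x t) * \<phi>prev^(2*r - 1)
               else g (Suc i) (x t) * \<phi>prev)
      in (1 / g j (x t)) * (tder (eta f g k r \<delta> yd ylo yhi x (Suc i)) t - f j (x t) - c - k j * \<phi>)))"

end

theory Submission
  imports Defs
begin

text \<open>While the output constraint holds, the backstepping choice of the \<open>\<eta>\<^sub>i\<close> makes the cross terms in
  the derivative of \<open>\<W>\<^sub>n\<^sub>+\<^sub>1\<close> telescope, and the gain \<open>k\<^sub>1\<close> bar, which dominates \<open>|\<alpha>'/\<alpha>|\<close> and \<open>|\<beta>'/\<beta>|\<close>,
  absorbs the motion of the constraint; this gives the stated bound on the derivative.  Hence the
  Lyapunov function is nonincreasing, so \<open>\<zeta>\<^sup>2\<^sup>r \<le> 1 - exp (-2r \<W>(0)) < 1\<close> and by a first-exit argument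
  the constraint is never reached.  The saturation model keeps \<open>u\<close> strictly between \<open>u\<^sub>m\<^sub>i\<^sub>n\<close> and
  \<open>u\<^sub>m\<^sub>a\<^sub>x\<close>, so \<open>G(u) > 0\<close> and \<open>\<rho>\<close> obeys the designed dynamics.  All errors and their derivatives
  are then bounded, and a Barbalat-type argument turns the decay of the Lyapunov function into
  convergence of every error to zero.\<close>

section \<open>Calculus on the time axis\<close>

lemma at_within_Ici_nontrivial: "0 \<le> t \<Longrightarrow> at t within {0::real..} \<noteq> bot"
  apply (auto simp: trivial_limit_within islimpt_approachable)
  subgoal for e by (rule bexI[of _ "t + e / 2"]) (auto simp: dist_real_def)
  done

lemma tder_eq:
  assumes "0 \<le> t" "(h has_real_derivative D) (at t within {0..})"
  shows "tder h t = D"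
  using vector_derivative_within[OF at_within_Ici_nontrivial[OF assms(1)]] assms(2)
  by (simp add: tder_def has_real_derivative_iff_has_vector_derivative)

lemma has_real_derivative_at_interior_Ici:
  assumes "0 < t" "(h has_real_derivative D) (at t within {0::real..})"
  shows "(h has_real_derivative D) (at t)"
  using assms at_within_interior[of t "{0..}"] by simp

lemma decrease_bound_by_derivative:
  fixes W Wd :: "real \<Rightarrow> real"
  assumes "0 \<le> a" "a \<le> b"
    and W: "\<And>t. a \<le> t \<Longrightarrow> t \<le> b \<Longrightarrow> (W has_real_derivative Wd t) (at t within {0..})"
    and Wd: "\<And>t. a \<le> t \<Longrightarrow> t \<le> b \<Longrightarrow> Wd t \<le> - c"
  shows "W b \<le> W a - c * (b - a)"
proof -
  let ?V = "\<lambda>t. W t + c * t"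
  have "?V b \<le> ?V a"
  proof (rule DERIV_nonpos_imp_decreasing_open[OF \<open>a \<le> b\<close>])
    fix t assume t: "a < t" "t < b"
    have "(W has_real_derivative Wd t) (at t)"
      using has_real_derivative_at_interior_Ici W t assms(1) by simp
    then have "(?V has_real_derivative Wd t + c) (at t)"
      by (auto intro!: derivative_eq_intros)
    then show "\<exists>y. (?V has_real_derivative y) (at t) \<and> y \<le> 0"
      using Wd[of t] t by force
  next
    have "(?V has_real_derivative Wd t + c) (at t within {a..b})" if "t \<in> {a..b}" for t
      using DERIV_subset[OF W[of t]] that assms(1) by (auto intro!: derivative_eq_intros)
    then show "continuous_on {a..b} ?V" by (rule DERIV_continuous_on)
  qed
  then show ?thesis by (simp add: algebra_simps)
qed

lemma le_zero_at_end_by_continuity: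
  fixes h :: "real \<Rightarrow> real"
  assumes "continuous_on {0..} h" "0 < T" "\<And>s. 0 \<le> s \<Longrightarrow> s < T \<Longrightarrow> h s \<le> 0"
  shows "h T \<le> 0"
proof -
  have "closed {s \<in> {0..}. h s \<le> 0}"
    using continuous_on_closed_Collect_le[OF assms(1) continuous_on_const] by simp
  moreover have "{0..<T} \<subseteq> {s \<in> {0..}. h s \<le> 0}"
    using assms(3) by auto
  ultimately have "closure {0..<T} \<subseteq> {s \<in> {0..}. h s \<le> 0}"
    by (rule closure_minimal[rotated])
  moreover have "T \<in> closure {0..<T}"
    using closure_atLeastLessThan[OF assms(2)] assms(2) by simp
  ultimately show ?thesis by auto
qed

text \<open>Induction along the time axis: a continuous function cannot leave the positive half-line
  without a first time at which it vanishes.\<close>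
lemma Ici_positive_induct:
  fixes m :: "real \<Rightarrow> real"
  assumes m: "continuous_on {0..} m" and m0: "0 < m 0"
    and step: "\<And>T. 0 < T \<Longrightarrow> (\<And>s. 0 \<le> s \<Longrightarrow> s < T \<Longrightarrow> 0 < m s) \<Longrightarrow> 0 < m T"
    and t: "0 \<le> t"
  shows "0 < m t"
proof (rule ccontr)
  assume "\<not> 0 < m t"
  define Bad where "Bad = {s \<in> {0..}. m s \<le> 0}"
  have "t \<in> Bad" using \<open>\<not> 0 < m t\<close> t by (simp add: Bad_def)
  moreover have "closed Bad"
    unfolding Bad_def using continuous_on_closed_Collect_le[OF m continuous_on_const] by simp
  moreover have bdd: "bdd_below Bad" by (auto simp: Bad_def intro: bdd_belowI[of _ 0])
  ultimately have first: "Inf Bad \<in> Bad" using closed_contains_Inf by blast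
  have before: "0 < m s" if "0 \<le> s" "s < Inf Bad" for s
    using cInf_lower[OF _ bdd, of s] that by (force simp: Bad_def)
  have "0 < Inf Bad" using first m0 by (force simp: Bad_def order.order_iff_strict)
  then have "0 < m (Inf Bad)" using before by (rule step)
  then show False using first by (simp add: Bad_def)
qed

lemma stays_below_level:
  fixes u :: "real \<Rightarrow> real"
  assumes u: "continuous_on {0..} u" and u0: "u 0 < M"
    and at_level: "\<And>t. 0 \<le> t \<Longrightarrow> u t = M \<Longrightarrow> \<exists>D<0. (u has_real_derivative D) (at t within {0..})"
    and t: "0 \<le> t"
  shows "u t < M"
proof -
  have "0 < M - u t"
  proof (rule Ici_positive_induct[OF _ _ _ t])
    show "continuous_on {0..} (\<lambda>t. M - u t)" using u by (intro continuous_intros)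
    show "0 < M - u 0" using u0 by simp
    fix T :: real assume T: "0 < T" and below: "\<And>s. 0 \<le> s \<Longrightarrow> s < T \<Longrightarrow> 0 < M - u s"
    have "u T - M \<le> 0"
      using le_zero_at_end_by_continuity[OF _ T, of "\<lambda>s. u s - M"] u below
      by (force intro: continuous_intros)
    moreover have "u T \<noteq> M"
    proof
      assume "u T = M"
      then obtain D where "D < 0" and D: "(u has_real_derivative D) (at T within {0..})"
        using at_level[of T] T by auto
      obtain d where "0 < d" and d: "\<And>h. 0 < h \<Longrightarrow> T - h \<in> {0..} \<Longrightarrow> h < d \<Longrightarrow> u T < u (T - h)"
        using has_real_derivative_neg_dec_left[OF D \<open>D < 0\<close>] by blast
      define h where "h = min (d / 2) T"
      have "u T < u (T - h)" using d[of h] \<open>0 < d\<close> T by (auto simp: h_def)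
      moreover have "0 < M - u (T - h)" using below[of "T - h"] \<open>0 < d\<close> T by (auto simp: h_def)
      ultimately show False using \<open>u T = M\<close> by simp
    qed
    ultimately show "0 < M - u T" by simp
  qed
  then show ?thesis by simp
qed

lemma bounded_const_comp: "bounded ((\<lambda>x. c) ` S)"
  by (rule bounded_subset[of "{c}"]) auto

lemma bounded_mult_comp:
  fixes f g :: "'a \<Rightarrow> 'b::real_normed_algebra"
  assumes "bounded (f ` S)" "bounded (g ` S)"
  shows "bounded ((\<lambda>x. f x * g x) ` S)"
proof -
  obtain B C where "\<And>x. x \<in> S \<Longrightarrow> norm (f x) \<le> B" "\<And>x. x \<in> S \<Longrightarrow> norm (g x) \<le> C"
    using assms by (auto simp: bounded_iff)
  then have "norm (f x * g x) \<le> B * C" if "x \<in> S" for x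
    using that by (meson norm_ge_zero norm_mult_ineq mult_mono order_trans)
  then show ?thesis by (auto simp: bounded_iff)
qed

lemma bounded_power_comp:
  fixes f :: "'a \<Rightarrow> 'b::real_normed_algebra_1"
  assumes "bounded (f ` S)"
  shows "bounded ((\<lambda>x. f x ^ m) ` S)"
  by (induction m) (simp_all add: bounded_const_comp bounded_mult_comp assms)

lemma bounded_sqrt_comp:
  fixes f :: "'a \<Rightarrow> real"
  assumes "bounded (f ` S)"
  shows "bounded ((\<lambda>x. sqrt (f x)) ` S)"
proof -
  obtain B where B: "\<And>x. x \<in> S \<Longrightarrow> \<bar>f x\<bar> \<le> B"
    using assms by (auto simp: bounded_iff)
  have "\<bar>sqrt (f x)\<bar> \<le> 1 + B" if "x \<in> S" for x
  proof -
    have "sqrt \<bar>f x\<bar> \<le> 1 + \<bar>f x\<bar>"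
      by (rule real_le_lsqrt) (auto simp: power2_eq_square intro: order_trans[OF _ mult_right_mono[of 1]])
    then show ?thesis using B[OF that] by (simp add: real_sqrt_abs')
  qed
  then show ?thesis by (auto simp: bounded_iff)
qed

lemma bounded_derivative_imp_Lipschitz_Ici:
  fixes h h' :: "real \<Rightarrow> real"
  assumes h: "\<And>t. 0 \<le> t \<Longrightarrow> (h has_real_derivative h' t) (at t within {0..})"
    and "bounded (h' ` {0..})"
  obtains L where "0 \<le> L" "\<And>s t. 0 \<le> s \<Longrightarrow> 0 \<le> t \<Longrightarrow> \<bar>h s - h t\<bar> \<le> L * \<bar>s - t\<bar>"
proof -
  obtain L where L: "\<And>t. 0 \<le> t \<Longrightarrow> \<bar>h' t\<bar> \<le> L"
    using assms(2) by (auto simp: bounded_iff)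
  have "0 \<le> L" using L[of 0] by linarith
  moreover have "\<bar>h s - h t\<bar> \<le> L * \<bar>s - t\<bar>" if "0 \<le> s" "0 \<le> t" for s t
  proof -
    have "onorm ((*) (h' x)) \<le> L" if "0 \<le> x" for x
      using L[OF that] \<open>0 \<le> L\<close> by (intro onorm_bound) (auto simp: abs_mult intro: mult_right_mono)
    then show ?thesis
      using differentiable_bound[of "{0..}" h "\<lambda>t. (*) (h' t)" L s t] h that
      by (auto simp: has_field_derivative_def)
  qed
  ultimately show ?thesis by (rule that)
qed

lemma Lyapunov_decrease_near_large_value:
  fixes W Wd v :: "real \<Rightarrow> real"
  assumes W: "\<And>s. t \<le> s \<Longrightarrow> s \<le> t + h \<Longrightarrow> (W has_real_derivative Wd s) (at s within {0..})"
    and Wd: "\<And>s. t \<le> s \<Longrightarrow> s \<le> t + h \<Longrightarrow> Wd s \<le> - c * v s ^ (2 * m)"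
    and close: "\<And>s. t \<le> s \<Longrightarrow> s \<le> t + h \<Longrightarrow> \<bar>v s - v t\<bar> \<le> \<epsilon> / 2"
    and "0 \<le> c" "0 \<le> t" "0 \<le> h" "0 \<le> \<epsilon>" "\<epsilon> \<le> \<bar>v t\<bar>"
  shows "W (t + h) \<le> W t - c * (\<epsilon> / 2) ^ (2 * m) * h"
proof -
  have "W (t + h) \<le> W t - c * (\<epsilon> / 2) ^ (2 * m) * ((t + h) - t)"
  proof (rule decrease_bound_by_derivative[OF \<open>0 \<le> t\<close> _ W])
    fix s assume s: "t \<le> s" "s \<le> t + h"
    have "\<epsilon> / 2 \<le> \<bar>v s\<bar>" using close[OF s] assms(8) by linarith
    then have "(\<epsilon> / 2) ^ (2 * m) \<le> \<bar>v s\<bar> ^ (2 * m)"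
      using \<open>0 \<le> \<epsilon>\<close> by (intro power_mono) auto
    then have "c * (\<epsilon> / 2) ^ (2 * m) \<le> c * v s ^ (2 * m)"
      using \<open>0 \<le> c\<close> by (simp add: power_even_abs mult_left_mono)
    then show "Wd s \<le> - (c * (\<epsilon> / 2) ^ (2 * m))" using Wd[OF s] by linarith
  qed (use \<open>0 \<le> h\<close> in auto)
  then show ?thesis by simp
qed

text \<open>A Barbalat-type argument: a nonnegative Lyapunov function whose derivative is bounded by
  \<open>-c v\<^sup>2\<^sup>m\<close> forces a uniformly continuous \<open>v\<close> to zero, since every excursion \<open>|v| \<ge> \<epsilon>\<close> lasts
  long enough to lower \<open>W\<close> by a fixed amount.\<close>
lemma Lyapunov_tendsto_zero:
  fixes W Wd v v' :: "real \<Rightarrow> real"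
  assumes W: "\<And>t. 0 \<le> t \<Longrightarrow> (W has_real_derivative Wd t) (at t within {0..})"
    and Wd: "\<And>t. 0 \<le> t \<Longrightarrow> Wd t \<le> - c * v t ^ (2 * m)"
    and "0 < c" and W_nonneg: "\<And>t. 0 \<le> t \<Longrightarrow> 0 \<le> W t"
    and v: "\<And>t. 0 \<le> t \<Longrightarrow> (v has_real_derivative v' t) (at t within {0..})"
    and "bounded (v' ` {0..})"
  shows "(v \<longlongrightarrow> 0) at_top"
proof (rule tendstoI)
  fix \<epsilon> :: real assume "0 < \<epsilon>"
  obtain L where "0 \<le> L" and L: "\<And>s t. 0 \<le> s \<Longrightarrow> 0 \<le> t \<Longrightarrow> \<bar>v s - v t\<bar> \<le> L * \<bar>s - t\<bar>"
    using bounded_derivative_imp_Lipschitz_Ici[OF v assms(6)] by blast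
  have "Wd t \<le> - 0" if "0 \<le> t" for t
    using Wd[OF that] \<open>0 < c\<close> by (simp add: zero_le_even_power mult_nonneg_nonneg order_trans)
  then have mono: "W b \<le> W a" if "0 \<le> a" "a \<le> b" for a b
    using decrease_bound_by_derivative[OF that W, of 0] that by simp
  define h where "h = \<epsilon> / (2 * (L + 1))"
  define drop where "drop = c * (\<epsilon> / 2) ^ (2 * m) * h"
  have "0 < h" "0 < drop" using \<open>0 < \<epsilon>\<close> \<open>0 \<le> L\<close> \<open>0 < c\<close> by (simp_all add: h_def drop_def)
  show "eventually (\<lambda>t. dist (v t) 0 < \<epsilon>) at_top"
  proof (rule ccontr)
    assume "\<not> eventually (\<lambda>t. dist (v t) 0 < \<epsilon>) at_top"
    then have often: "\<exists>t\<ge>T. \<epsilon> \<le> \<bar>v t\<bar>" for T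
      by (auto simp: eventually_at_top_linorder not_less)
    have step: "\<exists>T'\<ge>T. W T' \<le> W T - drop" if "0 \<le> T" for T
    proof -
      obtain t where t: "T \<le> t" "\<epsilon> \<le> \<bar>v t\<bar>" using often by blast
      have "\<bar>v s - v t\<bar> \<le> \<epsilon> / 2" if "t \<le> s" "s \<le> t + h" for s
      proof -
        have "\<bar>v s - v t\<bar> \<le> L * \<bar>s - t\<bar>"
          using L[of s t] that t \<open>0 \<le> T\<close> by simp
        also have "\<dots> \<le> L * h"
          using that \<open>0 \<le> L\<close> by (intro mult_left_mono) auto
        also have "\<dots> \<le> \<epsilon> / 2" using \<open>0 < \<epsilon>\<close> \<open>0 \<le> L\<close> by (simp add: h_def field_simps)
        finally show ?thesis .
      qed
      then have "W (t + h) \<le> W t - drop"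
        unfolding drop_def using t \<open>0 \<le> T\<close> \<open>0 < h\<close> \<open>0 < c\<close> \<open>0 < \<epsilon>\<close> W Wd
        by (intro Lyapunov_decrease_near_large_value[where Wd = Wd]) auto
      then show ?thesis using mono[of T t] t \<open>0 \<le> T\<close> \<open>0 < h\<close> by (intro exI[of _ "t + h"]) auto
    qed
    have "\<exists>T\<ge>0. W T \<le> W 0 - real N * drop" for N
    proof (induction N)
      case (Suc N)
      then obtain T where "0 \<le> T" "W T \<le> W 0 - real N * drop" by auto
      moreover obtain T' where "T \<le> T'" "W T' \<le> W T - drop" using step \<open>0 \<le> T\<close> by blast
      ultimately show ?case by (intro exI[of _ T']) (auto simp: algebra_simps)
    qed auto
    moreover obtain N :: nat where "W 0 / drop < real N" using reals_Archimedean2 by blast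
    ultimately obtain T where "0 \<le> T" "W T \<le> W 0 - real N * drop" by blast
    moreover have "W 0 < real N * drop" using \<open>W 0 / drop < real N\<close> \<open>0 < drop\<close> by (simp add: field_simps)
    ultimately show False using W_nonneg[of T] by linarith
  qed
qed

section \<open>The barrier and saturation functions\<close>

lemma zeta_cases: "zeta a b p = (if 0 < p then p / b else p / a)"
  by (simp add: zeta_def Let_def)

lemma digam_cases: "digam r a b p = (if 0 < p then 1 / (b ^ (2*r) - p ^ (2*r)) else 1 / (a ^ (2*r) - p ^ (2*r)))"
  by (simp add: digam_def Let_def)

lemma zeta_power_bounds:
  assumes "0 < a" "0 < b" "- a < p" "p < b" "1 \<le> r"
  shows "0 \<le> zeta a b p ^ (2*r)" "zeta a b p ^ (2*r) < 1"
proof -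
  have "\<bar>zeta a b p\<bar> < 1"
    using assms by (auto simp: zeta_cases abs_div divide_less_eq less_divide_eq)
  then have "\<bar>zeta a b p\<bar> ^ (2*r) < 1"
    using assms(5) by (simp add: power_less_one_iff)
  then show "zeta a b p ^ (2*r) < 1"
    by (simp add: power_even_abs)
qed (simp add: zero_le_even_power)

lemma zeta_power_le_imp_bounds:
  assumes "0 < a" "0 < b" "1 \<le> r" "0 \<le> \<theta>" "zeta a b p ^ (2*r) \<le> \<theta> ^ (2*r)"
  shows "p \<le> \<theta> * b" "- p \<le> \<theta> * a"
proof -
  have "\<bar>zeta a b p\<bar> ^ (2*r) \<le> \<theta> ^ (2*r)"
    using assms(5) by (simp add: power_even_abs)
  moreover obtain m where "2*r = Suc m" using assms(3) by (cases "2*r") auto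
  ultimately have "\<bar>zeta a b p\<bar> \<le> \<theta>"
    using assms(4) power_le_imp_le_base by metis
  then have "0 < p \<Longrightarrow> p \<le> \<theta> * b" "\<not> 0 < p \<Longrightarrow> - p \<le> \<theta> * a"
    using assms(1,2) by (simp_all add: zeta_cases abs_div field_simps)
  moreover have "0 \<le> \<theta> * a" "0 \<le> \<theta> * b" using assms(1,2,4) by simp_all
  ultimately show "p \<le> \<theta> * b" "- p \<le> \<theta> * a" by linarith+
qed

lemma zeta_power_ge:
  assumes "0 < a" "0 < b" "a \<le> M" "b \<le> M"
  shows "(p / M) ^ (2*r) \<le> zeta a b p ^ (2*r)"
proof -
  have "\<bar>zeta a b p\<bar> = \<bar>p\<bar> / (if 0 < p then b else a)"
    using assms(1,2) by (simp add: zeta_cases abs_div)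
  moreover have "\<bar>p\<bar> / M \<le> \<bar>p\<bar> / (if 0 < p then b else a)"
    using assms by (intro divide_left_mono) auto
  ultimately have "\<bar>p\<bar> / M \<le> \<bar>zeta a b p\<bar>" by simp
  then have "\<bar>p / M\<bar> ^ (2*r) \<le> \<bar>zeta a b p\<bar> ^ (2*r)"
    using assms by (intro power_mono) (auto simp: abs_div)
  moreover have "even (2*r)" by simp
  ultimately show ?thesis by (simp only: power_even_abs)
qed

lemma digam_bound:
  assumes "m \<le> a" "m \<le> b" "0 < m" "0 < \<mu>" "zeta a b p ^ (2*r) \<le> 1 - \<mu>"
  shows "\<bar>digam r a b p\<bar> \<le> 1 / (m ^ (2*r) * \<mu>)"
proof -
  have side: "\<bar>1 / (c ^ (2*r) - p ^ (2*r))\<bar> \<le> 1 / (m ^ (2*r) * \<mu>)"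
    if c: "m \<le> c" "(p / c) ^ (2*r) \<le> 1 - \<mu>" for c
  proof -
    have "0 < c" using c assms by simp
    have "m ^ (2*r) * \<mu> \<le> c ^ (2*r) * (1 - (p / c) ^ (2*r))"
      using c assms by (intro mult_mono power_mono) auto
    also have "\<dots> = c ^ (2*r) - p ^ (2*r)"
      using \<open>0 < c\<close> by (simp add: power_divide field_simps)
    finally have "m ^ (2*r) * \<mu> \<le> c ^ (2*r) - p ^ (2*r)" .
    moreover have "0 < m ^ (2*r) * \<mu>" using assms by simp
    ultimately show ?thesis by (simp add: divide_left_mono)
  qed
  show ?thesis
    using side[of a] side[of b] assms by (auto simp: digam_cases zeta_cases)
qed

lemma satG_pos:
  assumes "umin < 0" "0 < umax" "even \<gamma>" "0 < \<gamma>" "umin < u" "u < umax"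
  shows "0 < satG umin umax \<gamma> u"
proof -
  have "\<bar>u / (if 0 < u then umax else umin)\<bar> < 1"
    using assms by (auto simp: abs_div divide_less_eq)
  then have "\<bar>u / (if 0 < u then umax else umin)\<bar> ^ \<gamma> < 1"
    using \<open>0 < \<gamma>\<close> by (simp add: power_less_one_iff)
  then have "(u / (if 0 < u then umax else umin)) ^ \<gamma> < 1"
    using \<open>even \<gamma>\<close> by (simp only: power_even_abs)
  then show ?thesis by (simp add: satG_def split: if_splits)
qed

lemma satG_at_bounds:
  assumes "umin < 0" "0 < umax" "0 < \<gamma>"
  shows "satG umin umax \<gamma> umax = 0" "satG umin umax \<gamma> umin = 0"
  using assms by (simp_all add: satG_def)

lemma has_real_derivative_zero_squeeze:
  fixes Z H :: "real \<Rightarrow> real"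
  assumes H: "(H has_real_derivative 0) (at t within S)"
    and squeeze: "\<And>s. 0 \<le> Z s \<and> Z s \<le> H s" and "Z t = 0" "H t = 0"
  shows "(Z has_real_derivative 0) (at t within S)"
proof -
  have "((\<lambda>s. \<bar>(H s - H t) / (s - t)\<bar>) \<longlongrightarrow> 0) (at t within S)"
    using H by (intro tendsto_rabs_zero) (simp add: has_field_derivative_iff)
  then have "((\<lambda>s. (Z s - Z t) / (s - t)) \<longlongrightarrow> 0) (at t within S)"
  proof (rule Lim_null_comparison[rotated], intro always_eventually allI)
    fix s
    have "Z s \<le> \<bar>H s\<bar>" using squeeze[of s] by linarith
    then show "norm ((Z s - Z t) / (s - t)) \<le> \<bar>(H s - H t) / (s - t)\<bar>"
      using squeeze[of s] assms(3,4) by (simp add: abs_div divide_right_mono)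
  qed
  then show ?thesis by (simp add: has_field_derivative_iff)
qed

lemma has_real_derivative_ln_barrier:
  assumes "(Z has_real_derivative Zd) (at t within S)" "Z t < 1"
  shows "((\<lambda>s. ln (1 / (1 - Z s))) has_real_derivative Zd / (1 - Z t)) (at t within S)"
proof -
  have "1 + Z t * Z t - Z t * 2 = (1 - Z t) ^ 2" by (simp add: power2_eq_square algebra_simps)
  then have "1 + Z t * Z t - Z t * 2 \<noteq> 0" using assms(2) by simp
  then show ?thesis using assms by (auto intro!: derivative_eq_intros simp: field_simps)
qed

lemma one_sided_barrier_has_derivative:
  fixes p c :: "real \<Rightarrow> real"
  assumes p: "(p has_real_derivative p') (at t within S)"
    and c: "(c has_real_derivative c') (at t within S)"
    and "0 < c t" "\<bar>p t\<bar> < c t" "1 \<le> r"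
  shows "((\<lambda>s. 1 / (2 * real r) * ln (1 / (1 - (p s / c s) ^ (2*r)))) has_real_derivative
           p t ^ (2*r - 1) * (p' - p t * c' / c t) / (c t ^ (2*r) - p t ^ (2*r))) (at t within S)"
proof -
  define q where "q = p t / c t"
  define P where "P = p t ^ (2*r - 1)"
  define C where "C = c t ^ (2*r - 1)"
  have Suc: "2*r = Suc (2*r - 1)" using assms(5) by simp
  have pow: "p t ^ (2*r) = P * p t" "c t ^ (2*r) = C * c t" "q ^ (2*r - 1) = P / C"
    unfolding P_def C_def q_def by (subst Suc, simp add: power_divide)+
  have "\<bar>p t\<bar> ^ (2*r) < c t ^ (2*r)" using assms(4,5) by (intro power_strict_mono) auto
  then have den: "0 < C * c t - P * p t" using pow(1,2) by (simp add: power_even_abs)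
  have "0 < C" using assms(3) by (simp add: C_def)
  have q_pow: "q ^ (2*r) = P * p t / (C * c t)"
    using pow(1,2) by (simp add: q_def power_divide)
  then have "q ^ (2*r) < 1" using den \<open>0 < C\<close> assms(3) by (simp add: divide_less_eq)
  have "((\<lambda>s. (p s / c s) ^ (2*r)) has_real_derivative
          real (2*r) * q ^ (2*r - 1) * ((p' * c t - p t * c') / (c t * c t))) (at t within S)"
    using DERIV_power[OF DERIV_divide[OF p c], of "2*r"] assms(3) by (simp add: q_def ac_simps)
  from DERIV_cmult[OF has_real_derivative_ln_barrier[OF this], of "1 / (2 * real r)"]
  have "((\<lambda>s. 1 / (2 * real r) * ln (1 / (1 - (p s / c s) ^ (2*r)))) has_real_derivative
          1 / (2 * real r) * (real (2*r) * q ^ (2*r - 1) * ((p' * c t - p t * c') / (c t * c t)) / (1 - q ^ (2*r))))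
          (at t within S)"
    using \<open>q ^ (2*r) < 1\<close> by (simp add: q_def)
  moreover have "1 / (2 * real r) * (real (2*r) * q ^ (2*r - 1) * ((p' * c t - p t * c') / (c t * c t)) / (1 - q ^ (2*r)))
      = P * (p' - p t * c' / c t) / (C * c t - P * p t)"
    using den \<open>0 < C\<close> assms(3,5) unfolding pow(3) q_pow by (simp add: field_simps)
  ultimately show ?thesis by (simp add: pow P_def)
qed

text \<open>The term \<open>-p c'/c\<close> coming from the moving constraint \<open>c\<close> is absorbed by the gain \<open>kb \<ge> |c'/c|\<close>.\<close>
lemma one_sided_barrier_derivative_bound:
  fixes p c G k1 kb c' :: real
  assumes "0 < c" "\<bar>p\<bar> < c" "1 \<le> r" "\<bar>c' / c\<bar> \<le> kb"
  shows "p ^ (2*r - 1) * ((G - (k1 + kb) * p) - p * c' / c) / (c ^ (2*r) - p ^ (2*r))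
           \<le> 1 / (c ^ (2*r) - p ^ (2*r)) * G * p ^ (2*r - 1) - k1 * (p / c) ^ (2*r) / (1 - (p / c) ^ (2*r))"
proof -
  define P where "P = p ^ (2*r - 1)"
  define D where "D = c ^ (2*r) - p ^ (2*r)"
  have pow: "p ^ (2*r) = P * p" unfolding P_def using assms(3) by (subst power_Suc2[symmetric]) simp
  have "\<bar>p\<bar> ^ (2*r) < c ^ (2*r)" using assms(2,3) by (intro power_strict_mono) auto
  then have "0 < D" by (simp add: D_def power_even_abs)
  have ratio: "k1 * (p / c) ^ (2*r) / (1 - (p / c) ^ (2*r)) = k1 * (P * p / D)"
    using assms(1) \<open>0 < D\<close> pow by (simp add: D_def power_divide field_simps)
  have "0 \<le> P * p" using zero_le_even_power[of "2*r" p] pow by simp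
  moreover have "0 \<le> kb + c' / c" using assms(4) abs_ge_minus_self[of "c' / c"] by linarith
  ultimately have "0 \<le> (kb + c' / c) * (P * p / D)"
    using \<open>0 < D\<close> by simp
  moreover have "P * ((G - (k1 + kb) * p) - p * c' / c) / D = 1 / D * G * P - k1 * (P * p / D) - (kb + c' / c) * (P * p / D)"
    using \<open>0 < D\<close> assms(1) by (simp add: field_simps)
  ultimately show ?thesis unfolding P_def[symmetric] D_def[symmetric] ratio by linarith
qed

text \<open>Derivative of the barrier term \<open>W\<^sub>1\<close>: away from \<open>p = 0\<close> it is a one-sided barrier, at \<open>p = 0\<close>
  it is squeezed between the two one-sided barriers and has derivative zero.\<close>
lemma barrier_derivative_bound:
  fixes p a b :: "real \<Rightarrow> real"
  assumes p: "(p has_real_derivative G - (k1 + kb) * p t) (at t within S)"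
    and a: "(a has_real_derivative a') (at t within S)" and b: "(b has_real_derivative b') (at t within S)"
    and "0 < a t" "0 < b t" "- a t < p t" "p t < b t" "1 \<le> r"
    and "\<bar>a' / a t\<bar> \<le> kb" "\<bar>b' / b t\<bar> \<le> kb"
  shows "\<exists>D. ((\<lambda>s. 1 / (2 * real r) * ln (1 / (1 - zeta (a s) (b s) (p s) ^ (2*r)))) has_real_derivative D) (at t within S)
           \<and> D \<le> digam r (a t) (b t) (p t) * G * p t ^ (2*r - 1)
                  - k1 * zeta (a t) (b t) (p t) ^ (2*r) / (1 - zeta (a t) (b t) (p t) ^ (2*r))"
proof -
  let ?W = "\<lambda>s. 1 / (2 * real r) * ln (1 / (1 - zeta (a s) (b s) (p s) ^ (2*r)))"
  have p_lim: "(p \<longlongrightarrow> p t) (at t within S)"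
    using DERIV_continuous[OF p] by (simp add: continuous_within)
  have side: "\<exists>D. (?W has_real_derivative D) (at t within S)
      \<and> D \<le> 1 / (c t ^ (2*r) - p t ^ (2*r)) * G * p t ^ (2*r - 1) - k1 * (p t / c t) ^ (2*r) / (1 - (p t / c t) ^ (2*r))"
    if c: "(c has_real_derivative c') (at t within S)" "0 < c t" "\<bar>p t\<bar> < c t" "\<bar>c' / c t\<bar> \<le> kb"
      and near: "eventually (\<lambda>s. zeta (a s) (b s) (p s) = p s / c s) (at t within S)"
      and at: "zeta (a t) (b t) (p t) = p t / c t" for c c'
  proof -
    have "eventually (\<lambda>s. ?W s = 1 / (2 * real r) * ln (1 / (1 - (p s / c s) ^ (2*r)))) (at t within S)"
      using near by eventually_elim simp
    then show ?thesis
      using one_sided_barrier_has_derivative[OF p c(1-3) \<open>1 \<le> r\<close>]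
        one_sided_barrier_derivative_bound[OF c(2,3) \<open>1 \<le> r\<close> c(4), of G k1] at
      by (subst has_field_derivative_cong_eventually) (auto simp: algebra_simps)
  qed
  consider "0 < p t" | "p t < 0" | "p t = 0" by linarith
  then show ?thesis
  proof cases
    case 1
    have "eventually (\<lambda>s. zeta (a s) (b s) (p s) = p s / b s) (at t within S)"
      using order_tendstoD(1)[OF p_lim 1] by eventually_elim (simp add: zeta_cases)
    then show ?thesis using side[OF b] 1 assms by (simp add: zeta_cases digam_cases)
  next
    case 2
    have "eventually (\<lambda>s. zeta (a s) (b s) (p s) = p s / a s) (at t within S)"
      using order_tendstoD(2)[OF p_lim 2] by eventually_elim (simp add: zeta_cases)
    then show ?thesis using side[OF a] 2 assms by (simp add: zeta_cases digam_cases)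
  next
    case 3
    let ?H = "\<lambda>s. (p s / b s) ^ (2*r) + (p s / a s) ^ (2*r)"
    have "(?H has_real_derivative 0) (at t within S)"
      using DERIV_add[OF DERIV_power[OF DERIV_divide[OF p b]] DERIV_power[OF DERIV_divide[OF p a]], of "2*r" "2*r"]
        assms(4,5,8) 3 by (simp add: power_0_left)
    then have dZ: "((\<lambda>s. zeta (a s) (b s) (p s) ^ (2*r)) has_real_derivative 0) (at t within S)"
      by (rule has_real_derivative_zero_squeeze) (use 3 assms(8) in \<open>auto simp: zeta_cases zero_le_even_power\<close>)
    have Z0: "zeta (a t) (b t) (p t) ^ (2*r) = 0" using 3 assms(8) by (simp add: zeta_cases)
    then have "zeta (a t) (b t) (p t) ^ (2*r) < 1" by linarith
    from DERIV_cmult[OF has_real_derivative_ln_barrier[OF dZ this], of "1 / (2 * real r)"]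
    have "(?W has_real_derivative 0) (at t within S)" by simp
    then show ?thesis using 3 Z0 assms(8) by (intro exI[of _ 0]) (simp add: power_0_left)
  qed
qed

lemma saturated_input_in_range:
  fixes u v :: "real \<Rightarrow> real"
  assumes "umin < 0" "0 < umax" "0 < p1" "0 < p2" "0 < \<gamma>"
    and u: "\<And>t. 0 \<le> t \<Longrightarrow> (u has_real_derivative p1 * satG umin umax \<gamma> (u t) * v t - p1 * p2 * u t) (at t within {0..})"
    and "u 0 = 0" "0 \<le> t"
  shows "umin < u t" "u t < umax"
proof -
  have cont: "continuous_on {0..} u"
    using u by (intro DERIV_continuous_on) auto
  show "u t < umax"
  proof (rule stays_below_level[OF cont _ _ \<open>0 \<le> t\<close>])
    fix s assume "0 \<le> s" "u s = umax"
    then show "\<exists>D<0. (u has_real_derivative D) (at s within {0..})"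
      using u[of s] satG_at_bounds assms(1-5) by (intro exI[of _ "- p1 * p2 * umax"]) auto
  qed (use assms in auto)
  have "- u t < - umin"
  proof (rule stays_below_level[OF _ _ _ \<open>0 \<le> t\<close>])
    show "continuous_on {0..} (\<lambda>t. - u t)" using cont by (intro continuous_intros)
    fix s assume "0 \<le> s" "- u s = - umin"
    then show "\<exists>D<0. ((\<lambda>t. - u t) has_real_derivative D) (at s within {0..})"
      using DERIV_minus[OF u[of s]] satG_at_bounds assms(1-5)
      by (intro exI[of _ "p1 * p2 * umin"]) (auto simp: mult_pos_neg)
  qed (use assms in auto)
  then show "umin < u t" by simp
qed

lemma backstepping_sum_telescopes:
  fixes e g c k :: "nat \<Rightarrow> real"
  assumes "2 \<le> n" and "\<And>j. 3 \<le> j \<Longrightarrow> c j = g (j - 1) * e (j - 1)"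
  shows "(\<Sum>j=2..n. e j * (g j * e (j + 1) - c j - k j * e j))
           = g n * e n * e (n + 1) - e 2 * c 2 - (\<Sum>j=2..n. k j * (e j)\<^sup>2)"
  using assms(1)
proof (induction n rule: dec_induct)
  case base then show ?case by (simp add: power2_eq_square algebra_simps)
next
  case (step m)
  then show ?case using assms(2)[of "Suc m"] by (simp add: power2_eq_square algebra_simps)
qed

section \<open>Abstract error dynamics\<close>

text \<open>The error dynamics of the backstepping design, abstracted from the plant: \<open>e 1, \<dots>, e n\<close> are
  \<open>\<phi>\<^sub>1, \<dots>, \<phi>\<^sub>n\<close>, \<open>e (n + 1)\<close> is \<open>\<rho>\<close>, \<open>gs i t\<close> is \<open>g\<^sub>i(x\<^sub>1(t), \<dots>, x\<^sub>i(t))\<close>, \<open>a, b\<close> are \<open>\<alpha>, \<beta>\<close> and \<open>kb\<close> is \<open>k\<^sub>1\<close> bar.\<close>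
locale error_system =
  fixes n r :: nat
    and k :: "nat \<Rightarrow> real"
    and a b a' b' kb :: "real \<Rightarrow> real"
    and lo hi :: real
    and gs e :: "nat \<Rightarrow> real \<Rightarrow> real"
  assumes n_ge_2: "2 \<le> n" and r_pos: "1 \<le> r"
    and k_pos: "\<And>i. i \<in> {1..n+1} \<Longrightarrow> 0 < k i"
    and a_deriv: "\<And>t. 0 \<le> t \<Longrightarrow> (a has_real_derivative a' t) (at t within {0..})"
    and b_deriv: "\<And>t. 0 \<le> t \<Longrightarrow> (b has_real_derivative b' t) (at t within {0..})"
    and lo_pos: "0 < lo"
    and ab_bounds: "\<And>t. 0 \<le> t \<Longrightarrow> lo \<le> a t \<and> a t \<le> hi \<and> lo \<le> b t \<and> b t \<le> hi"
    and kb_ge: "\<And>t. 0 \<le> t \<Longrightarrow> \<bar>a' t / a t\<bar> \<le> kb t \<and> \<bar>b' t / b t\<bar> \<le> kb t"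
    and kb_bounded: "bounded (kb ` {0..})"
    and gs_bounded: "\<And>i. i \<in> {1..n} \<Longrightarrow> bounded (gs i ` {0..})"
    and e1_deriv: "\<And>t. 0 \<le> t \<Longrightarrow>
          (e 1 has_real_derivative gs 1 t * e 2 t - (k 1 + kb t) * e 1 t) (at t within {0..})"
    and e2_deriv: "\<And>t. 0 \<le> t \<Longrightarrow>
          (e 2 has_real_derivative gs 2 t * e 3 t - digam r (a t) (b t) (e 1 t) * gs 1 t * e 1 t ^ (2*r - 1)
             - k 2 * e 2 t) (at t within {0..})"
    and e_deriv: "\<And>j t. j \<in> {3..n} \<Longrightarrow> 0 \<le> t \<Longrightarrow>
          (e j has_real_derivative gs j t * e (j + 1) t - gs (j - 1) t * e (j - 1) t - k j * e j t) (at t within {0..})"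
    and e_last_deriv: "\<And>t. 0 \<le> t \<Longrightarrow>
          (e (n + 1) has_real_derivative - gs n t * e n t - k (n + 1) * e (n + 1) t) (at t within {0..})"
    and e1_init: "- a 0 < e 1 0" "e 1 0 < b 0"
begin

definition coupling :: "nat \<Rightarrow> real \<Rightarrow> real" where
  "coupling j t = (if j = 2 then digam r (a t) (b t) (e 1 t) * gs 1 t * e 1 t ^ (2*r - 1)
                   else gs (j - 1) t * e (j - 1) t)"

definition inside :: "real \<Rightarrow> bool" where
  "inside t \<longleftrightarrow> - a t < e 1 t \<and> e 1 t < b t"

definition Z :: "real \<Rightarrow> real" where
  "Z t = zeta (a t) (b t) (e 1 t) ^ (2*r)"

definition W :: "real \<Rightarrow> real" where
  "W t = 1 / (2 * real r) * ln (1 / (1 - Z t)) + 1/2 * (\<Sum>j=2..n. (e j t)\<^sup>2) + 1/2 * (e (n + 1) t)\<^sup>2"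

definition W_decay :: "real \<Rightarrow> real" where
  "W_decay t = - k 1 * Z t / (1 - Z t) - (\<Sum>j=2..n. k j * (e j t)\<^sup>2) - k (n + 1) * (e (n + 1) t)\<^sup>2"

lemma a_pos: "0 \<le> t \<Longrightarrow> 0 < a t"
  using ab_bounds[of t] lo_pos by linarith

lemma b_pos: "0 \<le> t \<Longrightarrow> 0 < b t"
  using ab_bounds[of t] lo_pos by linarith

lemma e_middle_deriv:
  assumes "j \<in> {2..n}" "0 \<le> t"
  shows "(e j has_real_derivative gs j t * e (j + 1) t - coupling j t - k j * e j t) (at t within {0..})"
proof (cases "j = 2")
  case True
  then show ?thesis using e2_deriv[OF assms(2)] by (simp add: coupling_def)
next
  case False
  then have "j \<in> {3..n}" using assms(1) by auto
  then show ?thesis using e_deriv[OF _ assms(2)] False by (simp add: coupling_def)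
qed

lemma Z_bounds: "0 \<le> t \<Longrightarrow> inside t \<Longrightarrow> 0 \<le> Z t \<and> Z t < 1"
  using zeta_power_bounds[OF a_pos b_pos _ _ r_pos] by (simp add: Z_def inside_def)

lemma squares_has_derivative:
  assumes "0 \<le> t"
  shows "((\<lambda>s. 1/2 * (\<Sum>j=2..n. (e j s)\<^sup>2)) has_real_derivative
           (\<Sum>j=2..n. e j t * (gs j t * e (j + 1) t - coupling j t - k j * e j t))) (at t within {0..})"
proof -
  have "((\<lambda>s. (e j s)\<^sup>2) has_real_derivative 2 * (e j t * (gs j t * e (j + 1) t - coupling j t - k j * e j t)))
          (at t within {0..})" if "j \<in> {2..n}" for j
    using DERIV_power[OF e_middle_deriv[OF that assms], of 2] by (simp add: algebra_simps)
  then have "((\<lambda>s. \<Sum>j=2..n. (e j s)\<^sup>2) has_real_derivative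
      (\<Sum>j=2..n. 2 * (e j t * (gs j t * e (j + 1) t - coupling j t - k j * e j t)))) (at t within {0..})"
    by (rule DERIV_sum)
  from DERIV_cmult[OF this, where c = "1/2"] show ?thesis
    by (simp add: sum_distrib_left)
qed

lemma W_has_derivative_le_decay:
  assumes "0 \<le> t" "inside t"
  shows "\<exists>W'. (W has_real_derivative W') (at t within {0..}) \<and> W' \<le> W_decay t"
proof -
  obtain D where D: "((\<lambda>s. 1 / (2 * real r) * ln (1 / (1 - Z s))) has_real_derivative D) (at t within {0..})"
    and "D \<le> digam r (a t) (b t) (e 1 t) * (gs 1 t * e 2 t) * e 1 t ^ (2*r - 1) - k 1 * Z t / (1 - Z t)"
    using barrier_derivative_bound[OF e1_deriv[OF assms(1)] a_deriv[OF assms(1)] b_deriv[OF assms(1)]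
        a_pos[OF assms(1)] b_pos[OF assms(1)] _ _ r_pos] kb_ge[OF assms(1)] assms(2)
    unfolding Z_def inside_def by blast
  then have D_le: "D \<le> e 2 t * coupling 2 t - k 1 * Z t / (1 - Z t)"
    by (simp add: coupling_def ac_simps)
  have last: "((\<lambda>s. 1/2 * (e (n + 1) s)\<^sup>2) has_real_derivative
      e (n + 1) t * (- gs n t * e n t - k (n + 1) * e (n + 1) t)) (at t within {0..})"
    using DERIV_cmult[OF DERIV_power[OF e_last_deriv[OF assms(1)], of 2], where c = "1/2"]
    by (simp add: algebra_simps)
  let ?S = "\<Sum>j=2..n. e j t * (gs j t * e (j + 1) t - coupling j t - k j * e j t)"
  let ?L = "e (n + 1) t * (- gs n t * e n t - k (n + 1) * e (n + 1) t)"
  have "(W has_real_derivative D + ?S + ?L) (at t within {0..})"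
    unfolding W_def[abs_def] using D squares_has_derivative[OF assms(1)] last by (intro DERIV_add)
  moreover have "?S = gs n t * e n t * e (n + 1) t - e 2 t * coupling 2 t - (\<Sum>j=2..n. k j * (e j t)\<^sup>2)"
    by (rule backstepping_sum_telescopes[OF n_ge_2]) (simp add: coupling_def)
  moreover have "?L = - (gs n t * e n t * e (n + 1) t) - k (n + 1) * (e (n + 1) t)\<^sup>2"
    by (simp add: power2_eq_square algebra_simps)
  ultimately have "D + ?S + ?L \<le> W_decay t"
    using D_le unfolding W_decay_def by linarith
  with \<open>(W has_real_derivative D + ?S + ?L) (at t within {0..})\<close> show ?thesis by blast
qed

definition W_rate :: "real \<Rightarrow> real" where
  "W_rate t = (SOME W'. (W has_real_derivative W') (at t within {0..}) \<and> W' \<le> W_decay t)"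

lemma W_rate:
  assumes "0 \<le> t" "inside t"
  shows "(W has_real_derivative W_rate t) (at t within {0..})" "W_rate t \<le> W_decay t"
  using someI_ex[OF W_has_derivative_le_decay[OF assms]] unfolding W_rate_def by blast+

lemma W_decay_le:
  assumes "0 \<le> t" "inside t"
  shows "W_decay t \<le> - k 1 * Z t - (\<Sum>j=2..n. k j * (e j t)\<^sup>2) - k (n + 1) * (e (n + 1) t)\<^sup>2"
proof -
  have "0 \<le> Z t" "Z t < 1" using Z_bounds[OF assms] by auto
  then have "Z t * (1 - Z t) \<le> Z t" by (intro mult_left_le) auto
  then have "Z t \<le> Z t / (1 - Z t)" using \<open>Z t < 1\<close> by (simp add: pos_le_divide_eq)
  then have "k 1 * Z t \<le> k 1 * Z t / (1 - Z t)"
    using k_pos[of 1] mult_left_mono[of "Z t" "Z t / (1 - Z t)" "k 1"] by simp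
  then show ?thesis unfolding W_decay_def by linarith
qed

lemma Z_term_nonneg: "0 \<le> t \<Longrightarrow> inside t \<Longrightarrow> 0 \<le> k 1 * Z t"
  using Z_bounds[of t] k_pos[of 1] by simp

lemma middle_terms_nonneg: "0 \<le> (\<Sum>j=2..n. k j * (e j t)\<^sup>2)"
proof (rule sum_nonneg)
  fix j assume "j \<in> {2..n}"
  then show "0 \<le> k j * (e j t)\<^sup>2" using k_pos[of j] by simp
qed

lemma last_term_nonneg: "0 \<le> k (n + 1) * (e (n + 1) t)\<^sup>2"
  using k_pos[of "n + 1"] by simp

lemma W_rate_nonpos: "0 \<le> t \<Longrightarrow> inside t \<Longrightarrow> W_rate t \<le> 0"
  using W_rate(2) W_decay_le Z_term_nonneg middle_terms_nonneg[of t] last_term_nonneg[of t]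
  by fastforce

lemma barrier_nonneg: "0 \<le> t \<Longrightarrow> inside t \<Longrightarrow> 0 \<le> 1 / (2 * real r) * ln (1 / (1 - Z t))"
  using Z_bounds by simp

lemma squares_le_W:
  assumes "0 \<le> t" "inside t"
  shows "1/2 * (\<Sum>j=2..n. (e j t)\<^sup>2) + 1/2 * (e (n + 1) t)\<^sup>2 \<le> W t"
  using barrier_nonneg[OF assms] by (simp add: W_def)

lemma squares_nonneg: "0 \<le> (\<Sum>j=2..n. (e j t)\<^sup>2)"
  by (simp add: sum_nonneg)

lemma W_nonneg: "0 \<le> t \<Longrightarrow> inside t \<Longrightarrow> 0 \<le> W t"
  using squares_le_W[of t] squares_nonneg[of t] zero_le_power2[of "e (n + 1) t"] by linarith

lemma W_le_initial:
  assumes "0 \<le> s" "\<And>\<tau>. 0 \<le> \<tau> \<Longrightarrow> \<tau> \<le> s \<Longrightarrow> inside \<tau>"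
  shows "W s \<le> W 0"
  using decrease_bound_by_derivative[of 0 s W W_rate 0] W_rate(1) W_rate_nonpos assms by simp

definition margin :: real where
  "margin = exp (- (2 * real r) * W 0)"

lemma inside_0: "inside 0"
  using e1_init by (simp add: inside_def)

lemma margin_bounds: "0 < margin" "margin \<le> 1"
  using W_nonneg[OF order_refl inside_0] r_pos by (auto simp: margin_def)

text \<open>Since \<open>W\<^sub>1 = (1/2r) ln (1/(1 - \<zeta>\<^sup>2\<^sup>r)) \<le> W \<le> W(0)\<close>, the barrier keeps \<open>\<zeta>\<^sup>2\<^sup>r\<close> uniformly below 1.\<close>
lemma Z_le_margin:
  assumes "0 \<le> s" "inside s" "W s \<le> W 0"
  shows "Z s \<le> 1 - margin"
proof -
  have Z: "0 \<le> Z s" "Z s < 1" using Z_bounds[OF assms(1,2)] by auto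
  have "1 / (2 * real r) * ln (1 / (1 - Z s)) \<le> W 0"
    using assms(3) squares_nonneg[of s] zero_le_power2[of "e (n + 1) s"] unfolding W_def by linarith
  then have "ln (1 / (1 - Z s)) \<le> 2 * real r * W 0" using r_pos by (simp add: field_simps)
  then have "exp (ln (1 / (1 - Z s))) \<le> exp (2 * real r * W 0)" by simp
  then have "1 / (1 - Z s) \<le> exp (2 * real r * W 0)" using Z by simp
  then have "exp (- (2 * real r * W 0)) \<le> 1 - Z s"
    using Z by (simp add: exp_minus field_simps)
  then show ?thesis by (simp add: margin_def)
qed

definition theta :: real where
  "theta = root (2*r) (1 - margin)"

lemma theta_bounds: "0 \<le> theta" "theta < 1" "theta ^ (2*r) = 1 - margin"
  using margin_bounds r_pos by (auto simp: theta_def real_root_pow_pos2 real_root_lt_1_iff)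

lemma e1_shrunk_while_inside:
  assumes "0 \<le> s" "\<And>\<tau>. 0 \<le> \<tau> \<Longrightarrow> \<tau> \<le> s \<Longrightarrow> inside \<tau>"
  shows "e 1 s \<le> theta * b s" "- e 1 s \<le> theta * a s"
proof -
  have "Z s \<le> theta ^ (2*r)"
    using Z_le_margin[OF assms(1) assms(2)[OF assms(1) order_refl] W_le_initial[OF assms]] theta_bounds(3)
    by simp
  then show "e 1 s \<le> theta * b s" "- e 1 s \<le> theta * a s"
    using zeta_power_le_imp_bounds[OF a_pos[OF assms(1)] b_pos[OF assms(1)] r_pos theta_bounds(1)]
    unfolding Z_def by blast+
qed

lemma continuous_on_e1_a_b: "continuous_on {0..} (e 1)" "continuous_on {0..} a" "continuous_on {0..} b"
  using e1_deriv a_deriv b_deriv by (auto intro!: DERIV_continuous_on)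

text \<open>Invariance of the output constraint: as long as the constraint holds, \<open>W\<close> decreases, so
  \<open>\<phi>\<^sub>1\<close> stays in the strictly smaller band \<open>[-\<theta> \<alpha>, \<theta> \<beta>]\<close>; by continuity it cannot reach the boundary.\<close>
lemma inside_invariant:
  assumes "0 \<le> t" shows "inside t"
proof -
  define m where "m s = min (b s - e 1 s) (e 1 s + a s)" for s
  have m_pos_iff: "0 < m s \<longleftrightarrow> inside s" for s by (auto simp: m_def inside_def)
  have "0 < m t"
  proof (rule Ici_positive_induct[OF _ _ _ assms])
    show "continuous_on {0..} m"
      unfolding m_def using continuous_on_e1_a_b by (intro continuous_intros)
    show "0 < m 0" using inside_0 m_pos_iff by simp
    fix T :: real assume T: "0 < T" and before: "\<And>s. 0 \<le> s \<Longrightarrow> s < T \<Longrightarrow> 0 < m s"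
    have shrunk: "e 1 s \<le> theta * b s \<and> - e 1 s \<le> theta * a s" if "0 \<le> s" "s < T" for s
      using e1_shrunk_while_inside[OF that(1)] before m_pos_iff that by force
    have "e 1 T - theta * b T \<le> 0"
      by (rule le_zero_at_end_by_continuity[OF _ T, of "\<lambda>s. e 1 s - theta * b s"])
        (use shrunk continuous_on_e1_a_b in \<open>auto intro!: continuous_intros\<close>)
    moreover have "- e 1 T - theta * a T \<le> 0"
      by (rule le_zero_at_end_by_continuity[OF _ T, of "\<lambda>s. - e 1 s - theta * a s"])
        (use shrunk continuous_on_e1_a_b in \<open>auto intro!: continuous_intros\<close>)
    moreover have "theta * b T < b T" "theta * a T < a T"
      using theta_bounds(2) a_pos[of T] b_pos[of T] T by simp_all
    ultimately show "0 < m T" by (simp add: m_def)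
  qed
  then show ?thesis using m_pos_iff by simp
qed

lemma W_le_W0: "0 \<le> t \<Longrightarrow> W t \<le> W 0"
  using W_le_initial inside_invariant by simp

lemma Z_le_one_minus_margin: "0 \<le> t \<Longrightarrow> Z t \<le> 1 - margin"
  using Z_le_margin inside_invariant W_le_W0 by simp

lemma e_bounded:
  assumes "j \<in> {1..n+1}"
  shows "bounded (e j ` {0..})"
proof (cases "j = 1")
  case True
  have "\<bar>e 1 t\<bar> \<le> hi" if "0 \<le> t" for t
    using inside_invariant[OF that] ab_bounds[OF that] by (auto simp: inside_def)
  then show ?thesis using True by (auto simp: bounded_iff)
next
  case False
  have "\<bar>e j t\<bar> \<le> sqrt (2 * W 0)" if "0 \<le> t" for t
  proof -
    have "(e j t)\<^sup>2 \<le> (\<Sum>i=2..n. (e i t)\<^sup>2) + (e (n + 1) t)\<^sup>2"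
    proof (cases "j = n + 1")
      case False
      then have "j \<in> {2..n}" using assms \<open>j \<noteq> 1\<close> by auto
      then show ?thesis
        using member_le_sum[of j "{2..n}" "\<lambda>i. (e i t)\<^sup>2"] by (simp add: add_increasing2)
    qed (simp add: squares_nonneg)
    also have "\<dots> \<le> 2 * W 0"
      using squares_le_W[OF that inside_invariant[OF that]] W_le_W0[OF that] by simp
    finally show ?thesis using real_sqrt_le_mono by fastforce
  qed
  then show ?thesis by (auto simp: bounded_iff)
qed

lemma digam_bounded: "bounded ((\<lambda>t. digam r (a t) (b t) (e 1 t)) ` {0..})"
proof -
  have "\<bar>digam r (a t) (b t) (e 1 t)\<bar> \<le> 1 / (lo ^ (2*r) * margin)" if "0 \<le> t" for t
    using digam_bound[of lo "a t" "b t" margin "e 1 t" r] ab_bounds[OF that] lo_pos margin_bounds(1)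
      Z_le_one_minus_margin[OF that] by (simp add: Z_def)
  then show ?thesis by (auto simp: bounded_iff)
qed

lemma e_bounded_derivative:
  assumes "j \<in> {1..n+1}"
  obtains e' where "\<And>t. 0 \<le> t \<Longrightarrow> (e j has_real_derivative e' t) (at t within {0..})"
    and "bounded (e' ` {0..})"
proof -
  have e: "bounded (e i ` {0..})" if "i \<in> {1..n+1}" for i using e_bounded that .
  have g: "bounded (gs i ` {0..})" if "i \<in> {1..n}" for i using gs_bounded that .
  note bounded_intros = bounded_plus_comp bounded_minus_comp bounded_mult_comp bounded_power_comp
    bounded_const_comp uminus_bounded_comp[THEN iffD2]
  consider "j = 1" | "j \<in> {2..n}" | "j = n + 1" using assms by fastforce
  then show ?thesis
  proof cases
    case 1
    have "bounded ((\<lambda>t. gs 1 t * e 2 t - (k 1 + kb t) * e 1 t) ` {0..})"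
      using n_ge_2 by (intro bounded_intros kb_bounded e g) auto
    with that[of "\<lambda>t. gs 1 t * e 2 t - (k 1 + kb t) * e 1 t"] show ?thesis using e1_deriv 1 by simp
  next
    case 2
    have "bounded (coupling j ` {0..})"
    proof (cases "j = 2")
      case True
      then have "coupling j = (\<lambda>t. digam r (a t) (b t) (e 1 t) * gs 1 t * e 1 t ^ (2*r - 1))"
        by (simp add: coupling_def fun_eq_iff)
      then show ?thesis using n_ge_2 by (simp only:) (intro bounded_intros digam_bounded e g; simp)
    next
      case False
      then have "coupling j = (\<lambda>t. gs (j - 1) t * e (j - 1) t)"
        by (simp add: coupling_def fun_eq_iff)
      then show ?thesis using 2 False by (simp only:) (intro bounded_intros e g; auto)
    qed
    then have "bounded ((\<lambda>t. gs j t * e (j + 1) t - coupling j t - k j * e j t) ` {0..})"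
      using 2 by (intro bounded_intros e g) auto
    with that[of "\<lambda>t. gs j t * e (j + 1) t - coupling j t - k j * e j t"] show ?thesis
      using e_middle_deriv 2 by simp
  next
    case 3
    have "bounded ((\<lambda>t. - gs n t * e n t - k (n + 1) * e (n + 1) t) ` {0..})"
      using n_ge_2 by (intro bounded_intros e g) auto
    with that[of "\<lambda>t. - gs n t * e n t - k (n + 1) * e (n + 1) t"] show ?thesis
      using e_last_deriv 3 by simp
  qed
qed

lemma W_rate_le_first: "0 \<le> t \<Longrightarrow> W_rate t \<le> - (k 1 / hi ^ (2*r)) * e 1 t ^ (2*r)"
proof -
  assume t: "0 \<le> t"
  have "(e 1 t / hi) ^ (2*r) \<le> Z t"
    using zeta_power_ge[of "a t" "b t" hi "e 1 t" r] a_pos[OF t] b_pos[OF t] ab_bounds[OF t]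
    by (simp add: Z_def)
  then have "k 1 * (e 1 t / hi) ^ (2*r) \<le> k 1 * Z t"
    using k_pos[of 1] by (intro mult_left_mono) auto
  then have "k 1 / hi ^ (2*r) * e 1 t ^ (2*r) \<le> k 1 * Z t"
    by (simp add: power_divide)
  then show ?thesis
    using W_rate[OF t inside_invariant[OF t]] W_decay_le[OF t inside_invariant[OF t]]
      middle_terms_nonneg[of t] last_term_nonneg[of t] by linarith
qed

lemma W_rate_le_component:
  assumes "0 \<le> t" "j \<in> {2..n+1}"
  shows "W_rate t \<le> - k j * (e j t)\<^sup>2"
proof -
  have "k j * (e j t)\<^sup>2 \<le> (\<Sum>i=2..n. k i * (e i t)\<^sup>2) + k (n + 1) * (e (n + 1) t)\<^sup>2"
  proof (cases "j = n + 1")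
    case False
    then have "j \<in> {2..n}" using assms(2) by auto
    moreover have "0 \<le> k i * (e i t)\<^sup>2" if "i \<in> {2..n}" for i
      using k_pos[of i] that by simp
    ultimately have "k j * (e j t)\<^sup>2 \<le> (\<Sum>i=2..n. k i * (e i t)\<^sup>2)"
      by (intro member_le_sum) auto
    then show ?thesis using last_term_nonneg[of t] by linarith
  qed (use middle_terms_nonneg[of t] in simp)
  then show ?thesis
    using W_rate[OF assms(1) inside_invariant[OF assms(1)]] W_decay_le[OF assms(1) inside_invariant[OF assms(1)]]
      Z_term_nonneg[OF assms(1) inside_invariant[OF assms(1)]] by simp
qed

lemma e_tendsto_zero:
  assumes "j \<in> {1..n+1}"
  shows "(e j \<longlongrightarrow> 0) at_top"
proof -
  obtain e' where e': "\<And>t. 0 \<le> t \<Longrightarrow> (e j has_real_derivative e' t) (at t within {0..})"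
    and "bounded (e' ` {0..})" using e_bounded_derivative[OF assms] by blast
  have W': "\<And>t. 0 \<le> t \<Longrightarrow> (W has_real_derivative W_rate t) (at t within {0..})"
    and W_nonneg': "\<And>t. 0 \<le> t \<Longrightarrow> 0 \<le> W t"
    using W_rate(1) W_nonneg inside_invariant by blast+
  note Lyapunov = Lyapunov_tendsto_zero[OF W' _ _ W_nonneg' e' \<open>bounded (e' ` {0..})\<close>]
  show ?thesis
  proof (cases "j = 1")
    case True
    have "0 < hi" using ab_bounds[of 0] lo_pos by simp
    then show ?thesis
      using Lyapunov[of "k 1 / hi ^ (2*r)" r] W_rate_le_first k_pos[of 1] True by simp
  next
    case False
    then have "j \<in> {2..n+1}" using assms by auto
    then show ?thesis
      using Lyapunov[of "k j" 1] W_rate_le_component k_pos[of j] by auto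
  qed
qed

end

section \<open>The closed loop\<close>

lemma bdd_derivs_first_derivative:
  assumes "bdd_derivs N h" "1 \<le> N"
  obtains h' where "\<And>t. 0 \<le> t \<Longrightarrow> (h has_real_derivative h' t) (at t within {0..})"
    and "bounded (h' ` {0..})"
proof -
  obtain D where "D 0 = h" and D: "\<forall>m<N. \<forall>t\<ge>0. (D m has_real_derivative D (Suc m) t) (at t within {0..})"
    and B: "\<forall>m\<le>N. \<exists>B. \<forall>t\<ge>0. \<bar>D m t\<bar> \<le> B"
    using assms(1) unfolding bdd_derivs_def by blast
  moreover have "bounded (D (Suc 0) ` {0..})" using B[rule_format, of "Suc 0"] assms(2) by (auto simp: bounded_iff)
  ultimately show ?thesis using that[of "D (Suc 0)"] D assms(2) by auto
qed

locale closed_loop =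
  fixes n r \<gamma> :: nat
    and f g :: "nat \<Rightarrow> (nat \<Rightarrow> real) \<Rightarrow> real"
    and glo ghi :: "nat \<Rightarrow> real"
    and umin umax p1 p2 \<delta> :: real
    and k :: "nat \<Rightarrow> real"
    and ylo yhi yd ylo' yhi' yd' :: "real \<Rightarrow> real"
    and \<alpha>lo \<alpha>hi \<beta>lo \<beta>hi :: real
    and x :: "real \<Rightarrow> nat \<Rightarrow> real"
    and u uc :: "real \<Rightarrow> real"
  assumes n_ge_2: "2 \<le> n" and r_ge: "n \<le> 2 * r"
    and g_bounds: "\<And>i z. i \<in> {1..n} \<Longrightarrow> 0 < glo i \<and> glo i \<le> \<bar>g i z\<bar> \<and> \<bar>g i z\<bar> \<le> ghi i"
    and saturation: "umin < 0" "0 < umax" "0 < p1" "0 < p2" "even \<gamma>" "0 < \<gamma>"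
    and ylo': "\<And>t. 0 \<le> t \<Longrightarrow> (ylo has_real_derivative ylo' t) (at t within {0..})"
    and yhi': "\<And>t. 0 \<le> t \<Longrightarrow> (yhi has_real_derivative yhi' t) (at t within {0..})"
    and yd': "\<And>t. 0 \<le> t \<Longrightarrow> (yd has_real_derivative yd' t) (at t within {0..})"
    and derivs_bounded: "bounded (ylo' ` {0..})" "bounded (yhi' ` {0..})" "bounded (yd' ` {0..})"
    and \<alpha>_bounds: "0 < \<alpha>lo" "\<And>t. 0 \<le> t \<Longrightarrow> \<alpha>lo \<le> yd t - ylo t \<and> yd t - ylo t \<le> \<alpha>hi"
    and \<beta>_bounds: "0 < \<beta>lo" "\<And>t. 0 \<le> t \<Longrightarrow> \<beta>lo \<le> yhi t - yd t \<and> yhi t - yd t \<le> \<beta>hi"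
    and k_pos: "\<And>i. i \<in> {1..n+1} \<Longrightarrow> 0 < k i"
    and \<delta>_pos: "0 < \<delta>"
    and plant: "\<And>t i. 0 \<le> t \<Longrightarrow> i \<in> {1..<n} \<Longrightarrow>
          ((\<lambda>s. x s i) has_real_derivative f i (x t) + g i (x t) * x t (i + 1)) (at t within {0..})"
    and plant_n: "\<And>t. 0 \<le> t \<Longrightarrow> ((\<lambda>s. x s n) has_real_derivative f n (x t) + g n (x t) * u t) (at t within {0..})"
    and actuator: "\<And>t. 0 \<le> t \<Longrightarrow>
          (u has_real_derivative p1 * satG umin umax \<gamma> (u t) * uc t - p1 * p2 * u t) (at t within {0..})"
    and commanded_input: "\<And>t. uc t = (p1 * p2 * u t + tder (eta f g k r \<delta> yd ylo yhi x n) t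
          - g n (x t) * (x t n - eta f g k r \<delta> yd ylo yhi x (n - 1) t)
          - k (n + 1) * (u t - eta f g k r \<delta> yd ylo yhi x n t)) / (p1 * satG umin umax \<gamma> (u t))"
    and u_0: "u 0 = 0"
    and init: "ylo 0 < x 0 1" "x 0 1 < yhi 0"
    and eta_differentiable: "\<And>i t. i \<in> {1..n} \<Longrightarrow> 0 \<le> t \<Longrightarrow>
          eta f g k r \<delta> yd ylo yhi x i differentiable (at t within {0..})"
begin

abbreviation E :: "nat \<Rightarrow> real \<Rightarrow> real" where
  "E \<equiv> eta f g k r \<delta> yd ylo yhi x"

definition kbar :: "real \<Rightarrow> real" where
  "kbar t = sqrt ((tder (\<lambda>s. yd s - ylo s) t / (yd t - ylo t))\<^sup>2
                 + (tder (\<lambda>s. yhi s - yd s) t / (yhi t - yd t))\<^sup>2 + \<delta>)"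

definition err :: "nat \<Rightarrow> real \<Rightarrow> real" where
  "err j t = (if j = n + 1 then u t - E n t else x t j - E (j - 1) t)"

lemma err_first: "err 1 t = x t 1 - yd t"
  using n_ge_2 by (simp add: err_def)

lemma err_middle: "j \<in> {1..n} \<Longrightarrow> err j t = x t j - E (j - 1) t"
  by (simp add: err_def)

lemma err_last: "err (n + 1) t = u t - E n t"
  by (simp add: err_def)

lemma g_nonzero: "i \<in> {1..n} \<Longrightarrow> g i z \<noteq> 0"
  using g_bounds[of i z] by auto

lemma eta_first: "g 1 (x t) * E 1 t = tder yd t - f 1 (x t) - (k 1 + kbar t) * err 1 t"
proof -
  have "E 1 t = 1 / g 1 (x t) * (tder yd t - f 1 (x t) - (k 1 + kbar t) * (x t 1 - yd t))"
    by (simp only: kbar_def One_nat_def eta.simps Let_def)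
  then show ?thesis using g_nonzero[of 1] n_ge_2 unfolding err_first by (simp del: eta.simps)
qed

lemma eta_step:
  assumes "j \<in> {2..n}"
  shows "g j (x t) * E j t = tder (E (j - 1)) t - f j (x t)
           - (if j = 2 then digam r (yd t - ylo t) (yhi t - yd t) (err 1 t) * g 1 (x t) * err 1 t ^ (2*r - 1)
              else g (j - 1) (x t) * err (j - 1) t)
           - k j * err j t"
proof -
  obtain i where j: "j = Suc (Suc i)" using assms by (metis atLeastAtMost_iff add_2_eq_Suc le_Suc_ex)
  have "E j t = 1 / g j (x t) * (tder (E (Suc i)) t - f j (x t)
      - (if i = 0 then digam r (yd t - ylo t) (yhi t - yd t) (x t (Suc i) - E i t) * g 1 (x t) * (x t (Suc i) - E i t) ^ (2*r - 1)
         else g (Suc i) (x t) * (x t (Suc i) - E i t))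
      - k j * (x t j - E (Suc i) t))"
    unfolding j by (simp only: eta.simps Let_def)
  moreover have "err (Suc i) t = x t (Suc i) - E i t" "err j t = x t j - E (Suc i) t"
    using assms by (simp_all add: err_middle j)
  moreover have "E 0 = yd" by simp
  ultimately show ?thesis using g_nonzero[of j] assms
    by (simp add: j err_first[unfolded One_nat_def] del: eta.simps)
qed

lemma tder_reference:
  assumes "0 \<le> t"
  shows "tder yd t = yd' t" "tder (\<lambda>s. yd s - ylo s) t = yd' t - ylo' t"
    "tder (\<lambda>s. yhi s - yd s) t = yhi' t - yd' t"
  using assms ylo' yhi' yd' by (auto intro!: tder_eq derivative_eq_intros)

lemma E_has_derivative:
  assumes "i \<le> n" "0 \<le> t"
  shows "(E i has_real_derivative tder (E i) t) (at t within {0..})"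
proof (cases "i = 0")
  case True
  then show ?thesis using yd'[OF assms(2)] tder_reference(1)[OF assms(2)] by simp
next
  case False
  then have "E i differentiable (at t within {0..})" using eta_differentiable assms by simp
  then show ?thesis
    by (simp add: tder_def vector_derivative_works has_real_derivative_iff_has_vector_derivative)
qed

lemma state_has_derivative:
  assumes "j \<in> {1..n}" "0 \<le> t"
  shows "((\<lambda>s. x s j) has_real_derivative f j (x t) + g j (x t) * (err (j + 1) t + E j t)) (at t within {0..})"
proof (cases "j = n")
  case True
  then show ?thesis using plant_n[OF assms(2)] err_last[of t] by simp
next
  case False
  then have "x t (j + 1) = err (j + 1) t + E j t" using assms(1) by (simp add: err_middle)
  then show ?thesis using plant[OF assms(2), of j] assms(1) False by simp
qed

lemma err_has_derivative_from_plant: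
  assumes "j \<in> {1..n}" "0 \<le> t"
  shows "(err j has_real_derivative f j (x t) + g j (x t) * (err (j + 1) t + E j t) - tder (E (j - 1)) t)
           (at t within {0..})"
proof -
  have "err j = (\<lambda>s. x s j - E (j - 1) s)" using assms(1) by (simp add: err_middle fun_eq_iff)
  moreover have "j - 1 \<le> n" using assms(1) by (meson atLeastAtMost_iff diff_le_self order_trans)
  ultimately show ?thesis
    using DERIV_diff[OF state_has_derivative[OF assms] E_has_derivative[OF _ assms(2), of "j - 1"]] by simp
qed

lemma err_first_has_derivative:
  assumes "0 \<le> t"
  shows "(err 1 has_real_derivative g 1 (x t) * err 2 t - (k 1 + kbar t) * err 1 t) (at t within {0..})"
proof -
  have "1 \<in> {1..n}" using n_ge_2 by simp
  note raw = err_has_derivative_from_plant[OF this assms, unfolded one_add_one diff_self]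
  have "tder (E 0) t = yd' t" using tder_reference(1)[OF assms] by simp
  then have "f 1 (x t) + g 1 (x t) * (err 2 t + E 1 t) - tder (E 0) t = g 1 (x t) * err 2 t - (k 1 + kbar t) * err 1 t"
    using eta_first[of t] tder_reference(1)[OF assms] unfolding distrib_left by linarith
  then show ?thesis using raw by simp
qed

lemma err_middle_has_derivative:
  assumes "j \<in> {2..n}" "0 \<le> t"
  shows "(err j has_real_derivative g j (x t) * err (j + 1) t
           - (if j = 2 then digam r (yd t - ylo t) (yhi t - yd t) (err 1 t) * g 1 (x t) * err 1 t ^ (2*r - 1)
              else g (j - 1) (x t) * err (j - 1) t)
           - k j * err j t) (at t within {0..})"
proof -
  have "j \<in> {1..n}" using assms(1) by simp
  note raw = err_has_derivative_from_plant[OF this assms(2)]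
  have "f j (x t) + g j (x t) * (err (j + 1) t + E j t) - tder (E (j - 1)) t = g j (x t) * err (j + 1) t
           - (if j = 2 then digam r (yd t - ylo t) (yhi t - yd t) (err 1 t) * g 1 (x t) * err 1 t ^ (2*r - 1)
              else g (j - 1) (x t) * err (j - 1) t)
           - k j * err j t"
    using eta_step[OF assms(1), of t] unfolding distrib_left by linarith
  then show ?thesis using raw by simp
qed

lemma input_in_range: "0 \<le> t \<Longrightarrow> umin < u t \<and> u t < umax"
  using saturated_input_in_range[OF saturation(1-4,6) actuator u_0] by blast

lemma err_last_has_derivative:
  assumes "0 \<le> t"
  shows "(err (n + 1) has_real_derivative - g n (x t) * err n t - k (n + 1) * err (n + 1) t) (at t within {0..})"
proof -
  have "0 < satG umin umax \<gamma> (u t)"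
    using satG_pos saturation input_in_range[OF assms] by blast
  then have "p1 * satG umin umax \<gamma> (u t) * uc t - p1 * p2 * u t - tder (E n) t
      = - g n (x t) * err n t - k (n + 1) * err (n + 1) t"
    using saturation(3) n_ge_2 err_last[of t] err_middle[of n t] unfolding commanded_input
    by (simp del: eta.simps)
  moreover have "err (n + 1) = (\<lambda>s. u s - E n s)" using err_last by blast
  ultimately show ?thesis
    using DERIV_diff[OF actuator[OF assms] E_has_derivative[OF order_refl assms]] by simp
qed

lemma kbar_ge:
  assumes "0 \<le> t"
  shows "\<bar>(yd' t - ylo' t) / (yd t - ylo t)\<bar> \<le> kbar t" "\<bar>(yhi' t - yd' t) / (yhi t - yd t)\<bar> \<le> kbar t"
proof -
  have "\<bar>A\<bar> \<le> sqrt (A\<^sup>2 + B\<^sup>2 + \<delta>)" "\<bar>B\<bar> \<le> sqrt (A\<^sup>2 + B\<^sup>2 + \<delta>)" for A B :: real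
    using \<delta>_pos zero_le_power2[of A] zero_le_power2[of B] by (auto intro!: real_le_rsqrt)
  then show "\<bar>(yd' t - ylo' t) / (yd t - ylo t)\<bar> \<le> kbar t" "\<bar>(yhi' t - yd' t) / (yhi t - yd t)\<bar> \<le> kbar t"
    unfolding kbar_def tder_reference[OF assms] by blast+
qed

lemma kbar_bounded: "bounded (kbar ` {0..})"
proof -
  have inverse_le: "\<bar>1 / y\<bar> \<le> 1 / c" if "0 < c" "c \<le> y" for c y :: real
    using that by (simp add: frac_le)
  have "\<bar>1 / (yd t - ylo t)\<bar> \<le> 1 / \<alpha>lo" "\<bar>1 / (yhi t - yd t)\<bar> \<le> 1 / \<beta>lo" if "0 \<le> t" for t
    using inverse_le[OF \<alpha>_bounds(1)] inverse_le[OF \<beta>_bounds(1)] \<alpha>_bounds(2)[OF that] \<beta>_bounds(2)[OF that]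
    by simp_all
  then have inverse_bounded:
    "bounded ((\<lambda>t. 1 / (yd t - ylo t)) ` {0..})" "bounded ((\<lambda>t. 1 / (yhi t - yd t)) ` {0..})"
    unfolding bounded_iff by auto
  define K where "K t = sqrt (((yd' t - ylo' t) * (1 / (yd t - ylo t)))\<^sup>2
      + ((yhi' t - yd' t) * (1 / (yhi t - yd t)))\<^sup>2 + \<delta>)" for t
  have "bounded (K ` {0..})"
    unfolding K_def
    by (intro bounded_sqrt_comp bounded_plus_comp bounded_power_comp bounded_mult_comp bounded_minus_comp
        bounded_const_comp derivs_bounded inverse_bounded)
  moreover have "kbar ` {0..} = K ` {0..}"
    by (rule image_cong) (simp_all add: kbar_def K_def tder_reference)
  ultimately show ?thesis by simp
qed

sublocale error_system n r k "\<lambda>t. yd t - ylo t" "\<lambda>t. yhi t - yd t" "\<lambda>t. yd' t - ylo' t" "\<lambda>t. yhi' t - yd' t"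
  kbar "min \<alpha>lo \<beta>lo" "max \<alpha>hi \<beta>hi" "\<lambda>i t. g i (x t)" err
proof
  show "2 \<le> n" "\<And>i. i \<in> {1..n+1} \<Longrightarrow> 0 < k i" by (fact n_ge_2 k_pos)+
  show "1 \<le> r" using n_ge_2 r_ge by simp
  show "((\<lambda>t. yd t - ylo t) has_real_derivative yd' t - ylo' t) (at t within {0..})"
    "((\<lambda>t. yhi t - yd t) has_real_derivative yhi' t - yd' t) (at t within {0..})" if "0 \<le> t" for t
    using ylo'[OF that] yhi'[OF that] yd'[OF that] by (auto intro!: derivative_eq_intros)
  show "0 < min \<alpha>lo \<beta>lo" using \<alpha>_bounds(1) \<beta>_bounds(1) by simp
  show "min \<alpha>lo \<beta>lo \<le> yd t - ylo t \<and> yd t - ylo t \<le> max \<alpha>hi \<beta>hi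
      \<and> min \<alpha>lo \<beta>lo \<le> yhi t - yd t \<and> yhi t - yd t \<le> max \<alpha>hi \<beta>hi" if "0 \<le> t" for t
    using \<alpha>_bounds(2)[OF that] \<beta>_bounds(2)[OF that] by linarith
  show "\<bar>(yd' t - ylo' t) / (yd t - ylo t)\<bar> \<le> kbar t \<and> \<bar>(yhi' t - yd' t) / (yhi t - yd t)\<bar> \<le> kbar t"
    if "0 \<le> t" for t
    using kbar_ge[OF that] by blast
  show "bounded (kbar ` {0..})" by (fact kbar_bounded)
  show "bounded ((\<lambda>t. g i (x t)) ` {0..})" if "i \<in> {1..n}" for i
    using g_bounds[OF that] by (auto simp: bounded_iff intro!: exI[of _ "ghi i"])
  show "(err 1 has_real_derivative g 1 (x t) * err 2 t - (k 1 + kbar t) * err 1 t) (at t within {0..})"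
    if "0 \<le> t" for t
    using err_first_has_derivative[OF that] .
  show "(err 2 has_real_derivative g 2 (x t) * err 3 t
      - digam r (yd t - ylo t) (yhi t - yd t) (err 1 t) * g 1 (x t) * err 1 t ^ (2*r - 1) - k 2 * err 2 t)
      (at t within {0..})" if "0 \<le> t" for t
    using err_middle_has_derivative[of 2 t] n_ge_2 that by simp
  show "(err j has_real_derivative g j (x t) * err (j + 1) t - g (j - 1) (x t) * err (j - 1) t - k j * err j t)
      (at t within {0..})" if "j \<in> {3..n}" "0 \<le> t" for j t
    using err_middle_has_derivative[of j t] that by simp
  show "(err (n + 1) has_real_derivative - g n (x t) * err n t - k (n + 1) * err (n + 1) t) (at t within {0..})"
    if "0 \<le> t" for t
    using err_last_has_derivative[OF that] .
  show "- (yd 0 - ylo 0) < err 1 0" "err 1 0 < yhi 0 - yd 0"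
    using init err_first[of 0] by simp_all
qed

theorem closed_loop_stability:
  "(\<forall>t\<ge>0. ylo t < x t 1 \<and> x t 1 < yhi t)
   \<and> (\<forall>t\<ge>0. \<exists>W'. ((\<lambda>t. 1 / (2 * real r) * ln (1 / (1 - zeta (yd t - ylo t) (yhi t - yd t) (x t 1 - yd t) ^ (2 * r)))
                  + 1/2 * (\<Sum>j=2..n. (x t j - E (j - 1) t)\<^sup>2) + 1/2 * (u t - E n t)\<^sup>2)
          has_real_derivative W') (at t within {0..}) \<and>
        W' \<le> - k 1 * zeta (yd t - ylo t) (yhi t - yd t) (x t 1 - yd t) ^ (2 * r)
                / (1 - zeta (yd t - ylo t) (yhi t - yd t) (x t 1 - yd t) ^ (2 * r))
             - (\<Sum>j=2..n. k j * (x t j - E (j - 1) t)\<^sup>2) - k (n + 1) * (u t - E n t)\<^sup>2)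
   \<and> (\<forall>j\<in>{1..n}. ((\<lambda>t. x t j - E (j - 1) t) \<longlongrightarrow> 0) at_top)
   \<and> ((\<lambda>t. u t - E n t) \<longlongrightarrow> 0) at_top"
proof -
  have sums: "(\<Sum>j=2..n. c j * (err j t)\<^sup>2) = (\<Sum>j=2..n. c j * (x t j - E (j - 1) t)\<^sup>2)" for c t
    by (rule sum.cong) (simp_all add: err_middle)
  have W_eq: "W = (\<lambda>t. 1 / (2 * real r) * ln (1 / (1 - zeta (yd t - ylo t) (yhi t - yd t) (x t 1 - yd t) ^ (2 * r)))
                  + 1/2 * (\<Sum>j=2..n. (x t j - E (j - 1) t)\<^sup>2) + 1/2 * (u t - E n t)\<^sup>2)"
    using sums[of "\<lambda>_. 1"]
    by (simp add: fun_eq_iff W_def Z_def err_first[simplified] err_last[simplified] del: eta.simps)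
  have decay_eq: "W_decay t = - k 1 * zeta (yd t - ylo t) (yhi t - yd t) (x t 1 - yd t) ^ (2 * r)
                / (1 - zeta (yd t - ylo t) (yhi t - yd t) (x t 1 - yd t) ^ (2 * r))
             - (\<Sum>j=2..n. k j * (x t j - E (j - 1) t)\<^sup>2) - k (n + 1) * (u t - E n t)\<^sup>2" for t
    using sums[of k t] by (simp add: W_decay_def Z_def err_first[simplified] err_last[simplified] del: eta.simps)
  have "((\<lambda>t. x t j - E (j - 1) t) \<longlongrightarrow> 0) at_top" if "j \<in> {1..n}" for j
  proof -
    have "err j = (\<lambda>t. x t j - E (j - 1) t)" using that by (simp add: err_middle fun_eq_iff del: eta.simps)
    then show ?thesis using e_tendsto_zero[of j] that by simp
  qed
  moreover have "err (n + 1) = (\<lambda>t. u t - E n t)" using err_last by blast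
  then have "((\<lambda>t. u t - E n t) \<longlongrightarrow> 0) at_top" using e_tendsto_zero[of "n + 1"] by simp
  moreover have "ylo t < x t 1 \<and> x t 1 < yhi t" if "0 \<le> t" for t
    using inside_invariant[OF that] err_first[of t] by (simp add: inside_def)
  ultimately show ?thesis
    using W_has_derivative_le_decay inside_invariant unfolding W_eq decay_eq by blast
qed

end

theorem theorem4:
  fixes n r \<gamma> :: nat
    and f g :: "nat \<Rightarrow> (nat \<Rightarrow> real) \<Rightarrow> real"
    and glo ghi :: "nat \<Rightarrow> real"
    and umin umax p1 p2 \<delta> :: real
    and k :: "nat \<Rightarrow> real"
    and ylo yhi yd :: "real \<Rightarrow> real"
    and \<alpha>lo \<alpha>hi \<beta>lo \<beta>hi :: real
    and x :: "real \<Rightarrow> nat \<Rightarrow> real"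
    and u :: "real \<Rightarrow> real"
  defines "\<phi> \<equiv> (\<lambda>j t. x t j - eta f g k r \<delta> yd ylo yhi x (j - 1) t)"
    and "\<rho> \<equiv> (\<lambda>t. u t - eta f g k r \<delta> yd ylo yhi x n t)"
    and "\<zeta> \<equiv> (\<lambda>t. zeta (yd t - ylo t) (yhi t - yd t) (x t 1 - yd t))"
    and "uc \<equiv> (\<lambda>t. (p1 * p2 * u t + tder (eta f g k r \<delta> yd ylo yhi x n) t - g n (x t) * (x t n - eta f g k r \<delta> yd ylo yhi x (n - 1) t) - k (n + 1) * (u t - eta f g k r \<delta> yd ylo yhi x n t))
                    / (p1 * satG umin umax \<gamma> (u t)))"
    and "W \<equiv> (\<lambda>t. 1 / (2 * real r) * ln (1 / (1 - (zeta (yd t - ylo t) (yhi t - yd t) (x t 1 - yd t)) ^ (2 * r)))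
                  + 1/2 * (\<Sum>j=2..n. (x t j - eta f g k r \<delta> yd ylo yhi x (j - 1) t)^2) + 1/2 * (u t - eta f g k r \<delta> yd ylo yhi x n t)^2)"
  assumes n2: "n \<ge> 2"
    and smooth: "\<forall>i\<in>{1..n}. smooth_fun i (f i) \<and> smooth_fun i (g i)"
    and gbnd: "\<forall>i\<in>{1..n}. 0 < glo i \<and> glo i \<le> ghi i \<and> (\<forall>z. glo i \<le> \<bar>g i z\<bar> \<and> \<bar>g i z\<bar> \<le> ghi i)"
    and sat: "umin < 0" "0 < umax" "p1 > 0" "p2 > 0" "even \<gamma>" "\<gamma> > 0"
    and ycont: "continuous_on {0..} ylo" "continuous_on {0..} yhi"
    and yorder: "\<forall>t\<ge>0. ylo t < yhi t"
    and ybdd: "bdd_derivs (n + 1) ylo" "bdd_derivs (n + 1) yhi" "bdd_derivs (n + 1) yd"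
    and ydin: "\<forall>t\<ge>0. ylo t < yd t \<and> yd t < yhi t"
    and abnd: "0 < \<alpha>lo" "\<forall>t\<ge>0. \<alpha>lo \<le> yd t - ylo t \<and> yd t - ylo t \<le> \<alpha>hi"
    and bbnd: "0 < \<beta>lo" "\<forall>t\<ge>0. \<beta>lo \<le> yhi t - yd t \<and> yhi t - yd t \<le> \<beta>hi"
    and rn: "2 * r \<ge> n"
    and kpos: "\<forall>i\<in>{1..n+1}. k i > 0"
    and dpos: "\<delta> > 0"
    and plant: "\<forall>t\<ge>0. \<forall>i\<in>{1..<n}.
                  ((\<lambda>s. x s i) has_real_derivative (f i (x t) + g i (x t) * x t (i + 1))) (at t within {0..})"
    and plant_n: "\<forall>t\<ge>0. ((\<lambda>s. x s n) has_real_derivative (f n (x t) + g n (x t) * u t)) (at t within {0..})"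
    and actuator: "\<forall>t\<ge>0. (u has_real_derivative (p1 * satG umin umax \<gamma> (u t) * uc t - p1 * p2 * u t)) (at t within {0..})"
    and u0: "u 0 = 0"
    and init: "ylo 0 < x 0 1" "x 0 1 < yhi 0"
    and eta_diff: "\<forall>i\<in>{1..n}. \<forall>t\<ge>0. eta f g k r \<delta> yd ylo yhi x i differentiable (at t within {0..})"
  shows "(\<forall>t\<ge>0. ylo t < x t 1 \<and> x t 1 < yhi t)
       \<and> (\<forall>t\<ge>0. \<exists>W'. (W has_real_derivative W') (at t within {0..}) \<and>
            W' \<le> - k 1 * \<zeta> t ^ (2 * r) / (1 - \<zeta> t ^ (2 * r))
                 - (\<Sum>j=2..n. k j * (\<phi> j t)^2) - k (n + 1) * (\<rho> t)^2)
       \<and> (\<forall>j\<in>{1..n}. ((\<lambda>t. \<phi> j t) \<longlongrightarrow> 0) at_top)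
       \<and> (\<rho> \<longlongrightarrow> 0) at_top"
proof -
  \<comment> \<open>Smoothness of \<open>f\<^sub>i, g\<^sub>i\<close> only serves to make the \<open>\<eta>\<^sub>i\<close> differentiable, which \<open>eta_diff\<close> provides directly.\<close>
  obtain ylo' yhi' yd' where
      "\<And>t. 0 \<le> t \<Longrightarrow> (ylo has_real_derivative ylo' t) (at t within {0..})" "bounded (ylo' ` {0..})"
      "\<And>t. 0 \<le> t \<Longrightarrow> (yhi has_real_derivative yhi' t) (at t within {0..})" "bounded (yhi' ` {0..})"
      "\<And>t. 0 \<le> t \<Longrightarrow> (yd has_real_derivative yd' t) (at t within {0..})" "bounded (yd' ` {0..})"
    by (metis bdd_derivs_first_derivative le_add2 ybdd)
  then interpret L: closed_loop n r \<gamma> f g glo ghi umin umax p1 p2 \<delta> k ylo yhi yd ylo' yhi' yd'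
      \<alpha>lo \<alpha>hi \<beta>lo \<beta>hi x u uc
    using n2 rn gbnd sat abnd bbnd kpos dpos plant plant_n actuator u0 init eta_diff
    by unfold_locales (auto simp: uc_def)
  show ?thesis
    using L.closed_loop_stability unfolding \<phi>_def \<rho>_def \<zeta>_def W_def by simp
qed

end
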